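(* Let $n\ge1$ and $a=(a_0,\dots,a_n)\in(\mathbb{R}\cup\{\infty\})^{n+1}$ with $a_0,a_n<\infty$. Then $a$ is regular if and only if $H(a)=0$. If $a$ is not regular, then $H(a)\ge 1/6$.
   Context: $a$ is regular if the set $J=\{i: a_i<\infty\}$ is an arithmetic progression and each point $(i,a_i)$, $i\in J$, is a vertex of the Newton polygon $P(a)$, which is the convex hull of the vertical rays $\{(i,b): b\ge a_i\}$, $i\in J$. For an integer $s\ge 0$ let $D_s\subset\mathbb{R}^s$ be the set of real vectors $z=(z_1,\dots,z_s)$ such that for every $0\le k\le s-1-n$ the minimum $\min_{0\le i\le n}\{a_i+z_{k+1+i}\}$ is attained for at least two different indices $i$; $D_s$ is a polyhedral complex, $d_s=\dim D_s$, and the tropical entropy is $H(a)=\lim_{s\to\infty}d_s/s$. *)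

theory Defs
  imports "HOL-Analysis.Analysis" "HOL-Library.Extended_Real"
begin

text \<open>A vector a = (a_0,...,a_n) with entries in R \<union> {\<infinity>} is modelled by
  a :: nat \<Rightarrow> ereal together with n; only a 0, ..., a n matter, and the
  entries are assumed to be different from -\<infinity>.\<close>

definition supp_idx :: "(nat \<Rightarrow> ereal) \<Rightarrow> nat \<Rightarrow> nat set" where
  "supp_idx a n = {i. i \<le> n \<and> a i < \<infinity>}"

definition arith_prog :: "nat set \<Rightarrow> bool" where
  "arith_prog J \<longleftrightarrow> (\<exists>c d m. J = {c + d * k | k. k \<le> m})"

definition newton_polygon :: "(nat \<Rightarrow> ereal) \<Rightarrow> nat \<Rightarrow> (real \<times> real) set" where
  "newton_polygon a n =
     convex hull (\<Union>i\<in>supp_idx a n. {(real i, b) | b. a i \<le> ereal b})"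

definition regular :: "(nat \<Rightarrow> ereal) \<Rightarrow> nat \<Rightarrow> bool" where
  "regular a n \<longleftrightarrow> arith_prog (supp_idx a n) \<and>
     (\<forall>i\<in>supp_idx a n. (real i, real_of_ereal (a i)) extreme_point_of newton_polygon a n)"

text \<open>Points of R^s are functions z :: nat \<Rightarrow> real with coordinates z 1, ..., z s
  and z i = 0 for i outside {1..s}.\<close>

definition Rs :: "nat \<Rightarrow> (nat \<Rightarrow> real) set" where
  "Rs s = {z. \<forall>i. i \<notin> {1..s} \<longrightarrow> z i = 0}"

definition D_set :: "(nat \<Rightarrow> ereal) \<Rightarrow> nat \<Rightarrow> nat \<Rightarrow> (nat \<Rightarrow> real) set" where
  "D_set a n s = {z \<in> Rs s. \<forall>k. k + n + 1 \<le> s \<longrightarrow>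
      (\<exists>i\<le>n. \<exists>j\<le>n. i \<noteq> j \<and>
         (\<forall>l\<le>n. a i + ereal (z (k+1+i)) \<le> a l + ereal (z (k+1+l))) \<and>
         (\<forall>l\<le>n. a j + ereal (z (k+1+j)) \<le> a l + ereal (z (k+1+l))))}"

text \<open>Dimension of a subset S of R^s (for finite unions of polyhedra, such as the
  polyhedral complex D_s, this is the usual dimension): the largest m such that S
  contains an m-dimensional simplex, i.e. p + conv{0, v_0, ..., v_(m-1)} with
  v_0, ..., v_(m-1) \<in> R^s linearly independent.\<close>

definition contains_simplex :: "nat \<Rightarrow> (nat \<Rightarrow> real) set \<Rightarrow> nat \<Rightarrow> bool" where
  "contains_simplex s S m \<longleftrightarrow> (\<exists>p v. p \<in> Rs s \<and> (\<forall>j<m. v j \<in> Rs s) \<and>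
      (\<forall>c::nat \<Rightarrow> real. (\<forall>i. (\<Sum>j<m. c j * v j i) = 0) \<longrightarrow> (\<forall>j<m. c j = 0)) \<and>
      (\<forall>t::nat \<Rightarrow> real. (\<forall>j<m. 0 \<le> t j) \<and> (\<Sum>j<m. t j) \<le> 1 \<longrightarrow>
          (\<lambda>i. p i + (\<Sum>j<m. t j * v j i)) \<in> S))"

definition set_dim :: "nat \<Rightarrow> (nat \<Rightarrow> real) set \<Rightarrow> nat" where
  "set_dim s S = Sup {m. contains_simplex s S m}"

definition d_seq :: "(nat \<Rightarrow> ereal) \<Rightarrow> nat \<Rightarrow> nat \<Rightarrow> nat" where
  "d_seq a n s = set_dim s (D_set a n s)"

definition tropical_entropy :: "(nat \<Rightarrow> ereal) \<Rightarrow> nat \<Rightarrow> real" where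
  "tropical_entropy a n = lim (\<lambda>s. real (d_seq a n s) / real s)"

end

theory Submission
  imports Defs
begin

text \<open>
  If \<open>a\<close> is regular, its support is \<open>{0, d, \<dots>, d m}\<close> and \<open>j \<mapsto> a (d j)\<close> is strictly convex. For
  \<open>z \<in> D\<^sub>s\<close>, shifting a window by \<open>d\<close> can move its last minimiser at most one step to the left, so the
  coordinates at which the \<open>s - n\<close> windows attain their last minimum are pairwise distinct. \<open>D\<^sub>s\<close> is
  covered by finitely many affine spaces, each prescribing these ties; a simplex in \<open>D\<^sub>s\<close> lies in one of
  them, where each of those \<open>s - n\<close> coordinates is determined by a smaller one. Hence \<open>d\<^sub>s \<le> n\<close> and
  \<open>H(a) = 0\<close>.

  Restricting a simplex to the first \<open>s\<close> and the last \<open>t\<close> coordinates shows \<open>d\<^sub>s\<^sub>+\<^sub>t \<le> d\<^sub>s + d\<^sub>t\<close>,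
  so \<open>H(a)\<close> exists by Fekete's lemma. If \<open>a\<close> is not regular, walking along the lower boundary of the
  Newton polygon produces a supporting line through finite entries \<open>u\<close> and \<open>u + g\<close> while some finite
  entry \<open>r\<close> lies in another residue class modulo \<open>g\<close>. Choosing the coordinates of a point of \<open>D\<^sub>s\<close>
  according to their residues modulo \<open>g\<close> in a suitable pattern leaves about \<open>s / 6\<close> of them free to
  increase independently, so \<open>d\<^sub>s \<ge> s / 6 - O(1)\<close> and \<open>H(a) \<ge> 1 / 6\<close>.
\<close>

section \<open>Independent families of finitely supported vectors\<close>

definition indep_family :: "('j \<Rightarrow> 'i \<Rightarrow> 'a::field) \<Rightarrow> 'j set \<Rightarrow> bool" where
  "indep_family v A \<longleftrightarrow> (\<forall>c. (\<forall>i. (\<Sum>j\<in>A. c j * v j i) = 0) \<longrightarrow> (\<forall>j\<in>A. c j = 0))"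

definition in_family_span :: "('j \<Rightarrow> 'i \<Rightarrow> 'a::field) \<Rightarrow> 'j set \<Rightarrow> ('i \<Rightarrow> 'a) \<Rightarrow> bool" where
  "in_family_span v A x \<longleftrightarrow> (\<exists>\<beta>. \<forall>i. x i = (\<Sum>j\<in>A. \<beta> j * v j i))"

lemma indep_family_eliminate:
  assumes A: "finite A" "indep_family v A" and j0: "j0 \<in> A" "v j0 q \<noteq> 0"
  shows "indep_family (\<lambda>j i. v j i - v j q / v j0 q * v j0 i) (A - {j0})"
  unfolding indep_family_def
proof (intro allI impI)
  fix c assume c: "\<forall>i. (\<Sum>j\<in>A - {j0}. c j * (v j i - v j q / v j0 q * v j0 i)) = 0"
  define c' where "c' = c(j0 := - (\<Sum>j\<in>A - {j0}. c j * v j q) / v j0 q)"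
  have "(\<Sum>j\<in>A. c' j * v j i) = 0" for i
  proof -
    have "(\<Sum>j\<in>A. c' j * v j i) = c' j0 * v j0 i + (\<Sum>j\<in>A - {j0}. c j * v j i)"
      using A(1) j0(1) by (simp add: sum.remove c'_def)
    also have "\<dots> = (\<Sum>j\<in>A - {j0}. c j * (v j i - v j q / v j0 q * v j0 i))"
      by (simp add: c'_def algebra_simps sum_subtractf sum_distrib_left sum_divide_distrib)
    finally show ?thesis using c by simp
  qed
  then have "\<forall>j\<in>A. c' j = 0" using A(2) unfolding indep_family_def by blast
  moreover have "c' j = c j" if "j \<noteq> j0" for j using that by (simp add: c'_def)
  ultimately show "\<forall>j\<in>A - {j0}. c j = 0" by (metis DiffD1 DiffD2 singletonI)
qed

lemma indep_family_card_le:
  assumes "finite U" "finite A" "indep_family v A" "\<And>j i. j \<in> A \<Longrightarrow> i \<notin> U \<Longrightarrow> v j i = 0"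
  shows "card A \<le> card U"
  using assms
proof (induction U arbitrary: A v rule: finite_induct)
  case empty
  have "\<forall>i. (\<Sum>j\<in>A. 1 * v j i) = 0" using empty.prems(3) by simp
  then have "A = {}" using empty.prems(2) unfolding indep_family_def by (auto dest!: spec[of _ "\<lambda>_. 1"])
  then show ?case by simp
next
  case (insert q U)
  show ?case
  proof (cases "\<forall>j\<in>A. v j q = 0")
    case True
    have "card A \<le> card U"
    proof (rule insert.IH[of A v])
      show "v j i = 0" if "j \<in> A" "i \<notin> U" for j i
        using insert.prems(3) True that by (cases "i = q") auto
    qed (use insert.prems in auto)
    then show ?thesis using insert.hyps by simp
  next
    case False
    then obtain j0 where j0: "j0 \<in> A" "v j0 q \<noteq> 0" by blast
    define w where "w j i = v j i - v j q / v j0 q * v j0 i" for j i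
    have "card (A - {j0}) \<le> card U"
    proof (rule insert.IH[of "A - {j0}" w])
      show "indep_family w (A - {j0})"
        unfolding w_def using insert.prems(1,2) j0 by (rule indep_family_eliminate)
      show "w j i = 0" if "j \<in> A - {j0}" "i \<notin> U" for j i
        using insert.prems(3) j0 that by (cases "i = q") (auto simp: w_def)
    qed (use insert.prems in auto)
    then show ?thesis using insert.hyps insert.prems(1) j0(1) by (simp add: card_Diff_singleton_if)
  qed
qed

lemma indep_family_reindex:
  assumes h: "bij_betw h K A" and w: "indep_family w A"
  shows "indep_family (\<lambda>k. w (h k)) K"
  unfolding indep_family_def
proof (intro allI impI ballI)
  fix c k assume c: "\<forall>i. (\<Sum>k\<in>K. c k * w (h k) i) = 0" and k: "k \<in> K"
  have "(\<Sum>x\<in>A. c (inv_into K h x) * w x i) = (\<Sum>k\<in>K. c k * w (h k) i)" for i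
    using h by (simp add: sum.reindex_bij_betw[OF h, symmetric] bij_betw_inv_into_left cong: sum.cong)
  then have "\<forall>x\<in>A. c (inv_into K h x) = 0" using c w unfolding indep_family_def by (metis (no_types))
  then show "c k = 0" using h k by (metis bij_betwE bij_betw_inv_into_left)
qed

lemma in_family_span_if_not_indep_family_insert:
  assumes A: "finite A" "indep_family w A" and j: "j \<notin> A" "\<not> indep_family w (insert j A)"
  shows "in_family_span w A (w j)"
proof -
  obtain c where c: "\<And>i. (\<Sum>x\<in>insert j A. c x * w x i) = 0" "\<exists>x\<in>insert j A. c x \<noteq> 0"
    using j(2) unfolding indep_family_def by blast
  have c_split: "c j * w j i = (\<Sum>x\<in>A. - (c x * w x i))" for i
    using c(1)[of i] A(1) j(1) by (simp add: sum_negf eq_neg_iff_add_eq_0)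
  have "c j \<noteq> 0"
  proof
    assume "c j = 0"
    then have "\<forall>x\<in>A. c x = 0" using A(2) c_split unfolding indep_family_def by (simp add: sum_negf)
    then show False using c(2) \<open>c j = 0\<close> by auto
  qed
  have "w j i = (\<Sum>a\<in>A. (- c a / c j) * w a i)" for i
  proof -
    have "w j i = (\<Sum>x\<in>A. - (c x * w x i)) / c j"
      using c_split[of i] \<open>c j \<noteq> 0\<close> by (simp add: eq_divide_eq mult.commute)
    also have "\<dots> = (\<Sum>a\<in>A. (- c a / c j) * w a i)" by (simp add: sum_divide_distrib)
    finally show ?thesis .
  qed
  then show ?thesis unfolding in_family_span_def by (intro exI[of _ "\<lambda>a. - c a / c j"]) blast
qed

lemma exists_indep_spanning_subfamily:
  assumes "finite I"
  shows "\<exists>A\<subseteq>I. indep_family w A \<and> (\<forall>j\<in>I. in_family_span w A (w j))"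
proof -
  define \<A> where "\<A> = {A. A \<subseteq> I \<and> indep_family w A}"
  have fin: "finite \<A>"
    using finite_Collect_subsets[OF assms] unfolding \<A>_def by (rule finite_subset[rotated]) auto
  have "{} \<in> \<A>" unfolding \<A>_def indep_family_def by simp
  then have "Max (card ` \<A>) \<in> card ` \<A>" using fin by (intro Max_in) auto
  then obtain A where A: "A \<in> \<A>" "card A = Max (card ` \<A>)" by auto
  have maximal: "card B \<le> card A" if "B \<in> \<A>" for B using A(2) fin that by simp
  have AI: "A \<subseteq> I" and indep: "indep_family w A" using A(1) by (auto simp: \<A>_def)
  have finA: "finite A" using AI assms finite_subset by blast
  have "in_family_span w A (w j)" if j: "j \<in> I" for j
  proof (cases "j \<in> A")
    case True
    then show ?thesis
      unfolding in_family_span_def using finA by (intro exI[of _ "\<lambda>a. of_bool (a = j)"]) simp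
  next
    case False
    have "card (insert j A) > card A" using False finA by simp
    then have "\<not> indep_family w (insert j A)" using maximal[of "insert j A"] AI j by (auto simp: \<A>_def)
    then show ?thesis by (rule in_family_span_if_not_indep_family_insert[OF finA indep False])
  qed
  then show ?thesis using AI indep by blast
qed

section \<open>Simplices and the dimension of subsets of \<open>\<real>\<^sup>s\<close>\<close>

definition simplex_set :: "(nat \<Rightarrow> real) \<Rightarrow> (nat \<Rightarrow> nat \<Rightarrow> real) \<Rightarrow> nat set \<Rightarrow> (nat \<Rightarrow> real) set" where
  "simplex_set p v A =
     {(\<lambda>i. p i + (\<Sum>j\<in>A. t j * v j i)) | t. (\<forall>j\<in>A. 0 \<le> t j) \<and> (\<Sum>j\<in>A. t j) \<le> 1}"

definition simplex_in :: "nat \<Rightarrow> (nat \<Rightarrow> real) set \<Rightarrow> (nat \<Rightarrow> real) \<Rightarrow> (nat \<Rightarrow> nat \<Rightarrow> real) \<Rightarrow> nat set \<Rightarrow> bool" where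
  "simplex_in s S p v A \<longleftrightarrow>
     p \<in> Rs s \<and> (\<forall>j\<in>A. v j \<in> Rs s) \<and> indep_family v A \<and> simplex_set p v A \<subseteq> S"

lemma simplex_set_subset_iff:
  "simplex_set p v A \<subseteq> S \<longleftrightarrow>
     (\<forall>t. (\<forall>j\<in>A. 0 \<le> t j) \<and> (\<Sum>j\<in>A. t j) \<le> 1 \<longrightarrow> (\<lambda>i. p i + (\<Sum>j\<in>A. t j * v j i)) \<in> S)"
  unfolding simplex_set_def by blast

lemma contains_simplex_iff_simplex_in: "contains_simplex s S m \<longleftrightarrow> (\<exists>p v. simplex_in s S p v {..<m})"
  unfolding contains_simplex_def simplex_in_def simplex_set_subset_iff indep_family_def Ball_def lessThan_iff
  by (rule refl)

lemma simplex_set_reindex_subset: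
  assumes h: "bij_betw h K A"
  shows "simplex_set p (\<lambda>k. v (h k)) K \<subseteq> simplex_set p v A"
proof
  fix x assume "x \<in> simplex_set p (\<lambda>k. v (h k)) K"
  then obtain \<tau> where \<tau>: "\<forall>k\<in>K. 0 \<le> \<tau> k" "(\<Sum>k\<in>K. \<tau> k) \<le> 1"
    and x: "x = (\<lambda>i. p i + (\<Sum>k\<in>K. \<tau> k * v (h k) i))"
    unfolding simplex_set_def by auto
  define t where "t j = \<tau> (inv_into K h j)" for j
  have t: "t (h k) = \<tau> k" if "k \<in> K" for k
    using h that by (simp add: t_def bij_betw_inv_into_left)
  have sum_t: "(\<Sum>j\<in>A. f j) = (\<Sum>k\<in>K. f (h k))" for f :: "nat \<Rightarrow> real"
    by (rule sum.reindex_bij_betw[OF h, symmetric])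
  have "\<forall>j\<in>A. 0 \<le> t j" using \<tau>(1) bij_betwE[OF bij_betw_inv_into[OF h]] by (simp add: t_def)
  moreover have "(\<Sum>j\<in>A. t j) \<le> 1" using \<tau>(2) t by (simp add: sum_t)
  moreover have "x = (\<lambda>i. p i + (\<Sum>j\<in>A. t j * v j i))" using x t by (simp add: sum_t)
  ultimately show "x \<in> simplex_set p v A" unfolding simplex_set_def by blast
qed

lemma contains_simplex_card:
  assumes A: "finite A" and S: "simplex_in s S p v A"
  shows "contains_simplex s S (card A)"
proof -
  obtain h where h: "bij_betw h {..<card A} A"
    using ex_bij_betw_nat_finite[OF A] by (auto simp: atLeast0LessThan)
  have "simplex_in s S p (\<lambda>k. v (h k)) {..<card A}"
    using S simplex_set_reindex_subset[OF h] indep_family_reindex[OF h] bij_betwE[OF h]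
    unfolding simplex_in_def by blast
  then show ?thesis unfolding contains_simplex_iff_simplex_in by blast
qed

lemma contains_simplex_le:
  assumes "contains_simplex s S m"
  shows "m \<le> s"
proof -
  obtain p v where simplex: "simplex_in s S p v {..<m}"
    using assms unfolding contains_simplex_iff_simplex_in by blast
  have "card {..<m} \<le> card {1..s}"
    by (rule indep_family_card_le[of _ _ v]) (use simplex in \<open>auto simp: simplex_in_def Rs_def\<close>)
  then show ?thesis by simp
qed

lemma finite_simplex_dims: "finite {m. contains_simplex s S m}"
  by (rule finite_subset[of _ "{..s}"]) (auto dest: contains_simplex_le)

lemma set_dim_le:
  assumes "\<And>m. contains_simplex s S m \<Longrightarrow> m \<le> N"
  shows "set_dim s S \<le> N"
  using assms finite_simplex_dims[of s S] unfolding set_dim_def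
  by (cases "{m. contains_simplex s S m} = {}") (auto simp: Sup_nat_def)

lemma le_set_dim: "contains_simplex s S m \<Longrightarrow> m \<le> set_dim s S"
  using finite_simplex_dims[of s S] unfolding set_dim_def by (auto simp: Sup_nat_def)

lemma contains_simplex_set_dim:
  assumes "contains_simplex s S m"
  shows "contains_simplex s S (set_dim s S)"
proof -
  have "set_dim s S \<in> {m. contains_simplex s S m}"
    unfolding set_dim_def using assms finite_simplex_dims[of s S] Max_in by (auto simp: Sup_nat_def)
  then show ?thesis by simp
qed

lemma simplex_set_vertices:
  assumes "finite A"
  shows "p \<in> simplex_set p v A" and "j \<in> A \<Longrightarrow> (\<lambda>i. p i + v j i) \<in> simplex_set p v A"
proof -
  show "p \<in> simplex_set p v A"
    unfolding simplex_set_def by (rule CollectI, rule exI[of _ "\<lambda>_. 0"]) simp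
  assume j: "j \<in> A"
  have "(\<lambda>i. p i + v j i) = (\<lambda>i. p i + (\<Sum>j'\<in>A. of_bool (j' = j) * v j' i))"
    using assms j by simp
  then show "(\<lambda>i. p i + v j i) \<in> simplex_set p v A"
    unfolding simplex_set_def using assms j by (intro CollectI exI[of _ "\<lambda>j'. of_bool (j' = j)"]) simp
qed

section \<open>Convex sets covered by finitely many affine sets\<close>

definition closed_under_lines :: "(nat \<Rightarrow> real) set \<Rightarrow> bool" where
  "closed_under_lines A \<longleftrightarrow> (\<forall>x\<in>A. \<forall>y\<in>A. \<forall>t. (\<lambda>i. (1 - t) * x i + t * y i) \<in> A)"

definition closed_under_segments :: "(nat \<Rightarrow> real) set \<Rightarrow> bool" where
  "closed_under_segments S \<longleftrightarrow>
     (\<forall>x\<in>S. \<forall>y\<in>S. \<forall>t. 0 \<le> t \<and> t \<le> 1 \<longrightarrow> (\<lambda>i. (1 - t) * x i + t * y i) \<in> S)"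

lemma closed_under_lines_line:
  assumes A: "closed_under_lines A" and "t1 \<noteq> t2"
    and "(\<lambda>i. x i + t1 * (y i - x i)) \<in> A" "(\<lambda>i. x i + t2 * (y i - x i)) \<in> A"
  shows "(\<lambda>i. x i + t * (y i - x i)) \<in> A"
proof -
  define \<tau> where "\<tau> = (t - t1) / (t2 - t1)"
  have "(\<lambda>i. (1 - \<tau>) * X i + \<tau> * Y i) \<in> A" if "X \<in> A" "Y \<in> A" for X Y
    using A that unfolding closed_under_lines_def by blast
  from this[OF assms(3,4)]
  have "(\<lambda>i. (1 - \<tau>) * (x i + t1 * (y i - x i)) + \<tau> * (x i + t2 * (y i - x i))) \<in> A" .
  moreover have "(1 - \<tau>) * (x i + t1 * (y i - x i)) + \<tau> * (x i + t2 * (y i - x i)) = x i + t * (y i - x i)" for i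
  proof -
    have "(1 - \<tau>) * (x i + t1 * (y i - x i)) + \<tau> * (x i + t2 * (y i - x i))
        = x i + (t1 + \<tau> * (t2 - t1)) * (y i - x i)"
      by (simp add: algebra_simps)
    moreover have "\<tau> * (t2 - t1) = t - t1" using \<open>t1 \<noteq> t2\<close> by (simp add: \<tau>_def)
    ultimately show ?thesis by simp
  qed
  ultimately show ?thesis by simp
qed

lemma closed_under_segments_simplex_set: "closed_under_segments (simplex_set p v A)"
  unfolding closed_under_segments_def
proof (intro ballI allI impI)
  fix x y and \<theta> :: real
  assume "x \<in> simplex_set p v A" "y \<in> simplex_set p v A" and \<theta>: "0 \<le> \<theta> \<and> \<theta> \<le> 1"
  then obtain t t' where t: "\<forall>j\<in>A. 0 \<le> t j" "(\<Sum>j\<in>A. t j) \<le> 1" "x = (\<lambda>i. p i + (\<Sum>j\<in>A. t j * v j i))"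
    and t': "\<forall>j\<in>A. 0 \<le> t' j" "(\<Sum>j\<in>A. t' j) \<le> 1" "y = (\<lambda>i. p i + (\<Sum>j\<in>A. t' j * v j i))"
    unfolding simplex_set_def by blast
  define t'' where "t'' j = (1 - \<theta>) * t j + \<theta> * t' j" for j
  have "\<forall>j\<in>A. 0 \<le> t'' j" using t t' \<theta> by (simp add: t''_def)
  moreover have "(\<Sum>j\<in>A. t'' j) = (1 - \<theta>) * (\<Sum>j\<in>A. t j) + \<theta> * (\<Sum>j\<in>A. t' j)"
    by (simp add: t''_def sum.distrib sum_distrib_left)
  then have "(\<Sum>j\<in>A. t'' j) \<le> 1"
    using t(2) t'(2) \<theta> mult_left_le[of "\<Sum>j\<in>A. t j" "1 - \<theta>"] mult_left_le[of "\<Sum>j\<in>A. t' j" \<theta>]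
    by linarith
  moreover have combination:
    "(\<Sum>j\<in>A. t'' j * v j i) = (1 - \<theta>) * (\<Sum>j\<in>A. t j * v j i) + \<theta> * (\<Sum>j\<in>A. t' j * v j i)" for i
    by (simp add: t''_def distrib_right sum.distrib sum_distrib_left mult.assoc)
  have "(1 - \<theta>) * x i + \<theta> * y i = p i + (\<Sum>j\<in>A. t'' j * v j i)" for i
    unfolding combination t(3) t'(3) by (simp add: algebra_simps)
  then have "(\<lambda>i. (1 - \<theta>) * x i + \<theta> * y i) = (\<lambda>i. p i + (\<Sum>j\<in>A. t'' j * v j i))" by simp
  ultimately show "(\<lambda>i. (1 - \<theta>) * x i + \<theta> * y i) \<in> simplex_set p v A"
    unfolding simplex_set_def by blast
qed

lemma closed_under_lines_cover_line:
  assumes F: "finite F" "\<forall>B\<in>F. closed_under_lines B"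
    and cover: "\<And>k. (\<lambda>i. x i + 1 / real (Suc k) * (y i - x i)) \<in> \<Union>F"
  shows "\<exists>B\<in>F. \<forall>t. (\<lambda>i. x i + t * (y i - x i)) \<in> B"
proof -
  define z where "z k = (\<lambda>i. x i + 1 / real (Suc k) * (y i - x i))" for k
  have "UNIV \<subseteq> (\<Union>B\<in>F. {k. z k \<in> B})" using cover by (auto simp: z_def)
  then have "infinite (\<Union>B\<in>F. {k. z k \<in> B})" using infinite_UNIV_nat finite_subset by blast
  then obtain B where B: "B \<in> F" "infinite {k. z k \<in> B}"
    using finite_UN_I[of F "\<lambda>B. {k. z k \<in> B}"] F(1) by blast
  then obtain k1 where k1: "z k1 \<in> B" using infinite_imp_nonempty by blast
  have "infinite ({k. z k \<in> B} - {k1})" using B(2) by simp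
  then obtain k2 where k2: "z k2 \<in> B" "k2 \<noteq> k1" using infinite_imp_nonempty by blast
  have "(\<lambda>i. x i + t * (y i - x i)) \<in> B" for t
    by (rule closed_under_lines_line[of B "1 / real (Suc k1)" "1 / real (Suc k2)"])
      (use F(2) B(1) k1 k2 in \<open>auto simp: z_def\<close>)
  then show ?thesis using B(1) by blast
qed

lemma closed_under_segments_subset_Union:
  assumes "finite F" "\<forall>A\<in>F. closed_under_lines A" "closed_under_segments S" "S \<subseteq> \<Union>F" "S \<noteq> {}"
  shows "\<exists>A\<in>F. S \<subseteq> A"
  using assms
proof (induction F rule: finite_induct)
  case empty
  then show ?case by simp
next
  case (insert A F)
  show ?case
  proof (cases "S \<subseteq> A")
    case False
    then obtain x where x: "x \<in> S" "x \<notin> A" by blast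
    have "S \<subseteq> \<Union>F"
    proof
      fix y assume y: "y \<in> S"
      have on_segment: "(\<lambda>i. x i + c * (y i - x i)) \<in> S" if "0 \<le> c" "c \<le> 1" for c
      proof -
        have "(\<lambda>i. (1 - c) * x i + c * y i) \<in> S"
          using insert.prems(2) x(1) y that unfolding closed_under_segments_def by blast
        moreover have "(\<lambda>i. (1 - c) * x i + c * y i) = (\<lambda>i. x i + c * (y i - x i))"
          by (simp add: algebra_simps)
        ultimately show ?thesis by simp
      qed
      have "(\<lambda>i. x i + 1 / real (Suc k) * (y i - x i)) \<in> \<Union>(insert A F)" for k
        using insert.prems(3) by (intro subsetD[OF _ on_segment]) auto
      then obtain B where B: "B \<in> insert A F" "\<forall>t. (\<lambda>i. x i + t * (y i - x i)) \<in> B"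
        using closed_under_lines_cover_line[of "insert A F" x y] insert.hyps(1) insert.prems(1) by blast
      from B(2)[rule_format, of 0] B(2)[rule_format, of 1] have "x \<in> B" "y \<in> B" by simp_all
      with B(1) x(2) show "y \<in> \<Union>F" by blast
    qed
    then obtain B where "B \<in> F" "S \<subseteq> B"
      using insert.IH[OF _ insert.prems(2) _ insert.prems(4)] insert.prems(1) by blast
    then show ?thesis by blast
  qed blast
qed

section \<open>Subadditivity of \<open>d\<^sub>s\<close> and existence of the entropy\<close>

definition window :: "nat \<Rightarrow> nat \<Rightarrow> (nat \<Rightarrow> real) \<Rightarrow> (nat \<Rightarrow> real)" where
  "window ofs r z = (\<lambda>i. if i \<in> {1..r} then z (i + ofs) else 0)"

lemma window_eq: "i \<in> {1..r} \<Longrightarrow> window ofs r z i = z (i + ofs)"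
  by (simp add: window_def)

lemma window_eq_0: "i \<notin> {1..r} \<Longrightarrow> window ofs r z i = 0"
  unfolding window_def by (simp only: if_False)

lemma window_in_Rs: "window ofs r z \<in> Rs r"
  unfolding window_def Rs_def by auto

lemma window_in_D_set:
  assumes z: "z \<in> D_set a n N" and N: "ofs + r \<le> N"
  shows "window ofs r z \<in> D_set a n r"
  unfolding D_set_def
proof (intro CollectI conjI allI impI window_in_Rs)
  fix k assume k: "k + n + 1 \<le> r"
  then have "(k + ofs) + n + 1 \<le> N" using N by simp
  then obtain i j where ij: "i \<le> n" "j \<le> n" "i \<noteq> j"
    "\<forall>l\<le>n. a i + ereal (z (k + ofs + 1 + i)) \<le> a l + ereal (z (k + ofs + 1 + l))"
    "\<forall>l\<le>n. a j + ereal (z (k + ofs + 1 + j)) \<le> a l + ereal (z (k + ofs + 1 + l))"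
    using z unfolding D_set_def by blast
  moreover have "window ofs r z (k + 1 + l) = z (k + ofs + 1 + l)" if "l \<le> n" for l
    using that k by (simp add: window_def algebra_simps)
  ultimately show "\<exists>i\<le>n. \<exists>j\<le>n. i \<noteq> j \<and>
         (\<forall>l\<le>n. a i + ereal (window ofs r z (k+1+i)) \<le> a l + ereal (window ofs r z (k+1+l))) \<and>
         (\<forall>l\<le>n. a j + ereal (window ofs r z (k+1+j)) \<le> a l + ereal (window ofs r z (k+1+l)))"
    by (intro exI[of _ i] exI[of _ j]) auto
qed

lemma simplex_in_window:
  assumes S: "simplex_in N (D_set a n N) p v A" and A: "finite A" "B \<subseteq> A"
    and B: "indep_family (\<lambda>j. window ofs r (v j)) B" and N: "ofs + r \<le> N"
  shows "simplex_in r (D_set a n r) (window ofs r p) (\<lambda>j. window ofs r (v j)) B"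
  unfolding simplex_in_def
proof (intro conjI ballI window_in_Rs B subsetI)
  fix x assume "x \<in> simplex_set (window ofs r p) (\<lambda>j. window ofs r (v j)) B"
  then obtain t where t: "\<forall>j\<in>B. 0 \<le> t j" "(\<Sum>j\<in>B. t j) \<le> 1"
    and x: "x = (\<lambda>i. window ofs r p i + (\<Sum>j\<in>B. t j * window ofs r (v j) i))"
    unfolding simplex_set_def by blast
  define t' where "t' j = (if j \<in> B then t j else 0)" for j
  have sum_t': "(\<Sum>j\<in>A. t' j * f j) = (\<Sum>j\<in>B. t j * f j)" for f :: "nat \<Rightarrow> real"
    using A by (intro sum.mono_neutral_cong_right) (auto simp: t'_def)
  have "(\<lambda>i. p i + (\<Sum>j\<in>A. t' j * v j i)) \<in> simplex_set p v A"
    unfolding simplex_set_def using t sum_t'[of "\<lambda>_. 1"] by (intro CollectI exI[of _ t']) (auto simp: t'_def)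
  then have "window ofs r (\<lambda>i. p i + (\<Sum>j\<in>A. t' j * v j i)) \<in> D_set a n r"
    using S N unfolding simplex_in_def by (blast intro: window_in_D_set)
  moreover have "window ofs r (\<lambda>i. p i + (\<Sum>j\<in>A. t' j * v j i)) = x"
  proof
    fix i show "window ofs r (\<lambda>i. p i + (\<Sum>j\<in>A. t' j * v j i)) i = x i"
    proof (cases "i \<in> {1..r}")
      case True
      then show ?thesis by (simp add: x window_eq[OF True] sum_t')
    next
      case False
      then show ?thesis by (simp add: x window_eq_0[OF False])
    qed
  qed
  ultimately show "x \<in> D_set a n r" by simp
qed

lemma Rs_add_windows:
  assumes "z \<in> Rs (s + t)"
  shows "z i = (if i \<le> s then window 0 s z i else window s t z (i - s))"
  using assms unfolding Rs_def window_def by (cases "i = 0") auto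

lemma sum_combination_eq_0:
  assumes "\<And>j. j \<in> I \<Longrightarrow> w j i = (\<Sum>a\<in>A. \<beta> j a * w a i)" and "\<And>a. a \<in> A \<Longrightarrow> (\<Sum>j\<in>I. c j * \<beta> j a) = 0"
  shows "(\<Sum>j\<in>I. c j * w j i) = (0::'a::comm_semiring_0)"
proof -
  have "(\<Sum>j\<in>I. c j * w j i) = (\<Sum>a\<in>A. (\<Sum>j\<in>I. c j * \<beta> j a) * w a i)"
    using assms(1) by (simp add: sum_distrib_left sum_distrib_right sum.swap[of _ A] mult.assoc)
  then show ?thesis using assms(2) by simp
qed

text \<open>Since a vector of \<open>\<real>\<^sup>s\<^sup>+\<^sup>t\<close> is determined by its two windows, independence of the \<open>v j\<close> passes to their
  coordinates with respect to spanning families of the two windows.\<close>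

lemma indep_family_window_coordinates:
  assumes I: "indep_family v I" "\<forall>j\<in>I. v j \<in> Rs (s + t)"
    and \<beta>: "\<And>j i. j \<in> I \<Longrightarrow> window 0 s (v j) i = (\<Sum>a\<in>A. \<beta> j a * window 0 s (v a) i)"
    and \<gamma>: "\<And>j i. j \<in> I \<Longrightarrow> window s t (v j) i = (\<Sum>b\<in>B. \<gamma> j b * window s t (v b) i)"
  shows "indep_family (\<lambda>j. case_sum (\<lambda>a. if a \<in> A then \<beta> j a else 0) (\<lambda>b. if b \<in> B then \<gamma> j b else 0)) I"
  unfolding indep_family_def
proof (intro allI impI)
  fix c assume c: "\<forall>x. (\<Sum>j\<in>I. c j * case_sum (\<lambda>a. if a \<in> A then \<beta> j a else 0) (\<lambda>b. if b \<in> B then \<gamma> j b else 0) x) = 0"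
  have "(\<Sum>j\<in>I. c j * v j i) = 0" for i
  proof (cases "i \<le> s")
    case True
    have "(\<Sum>j\<in>I. c j * window 0 s (v j) i) = 0"
    proof (rule sum_combination_eq_0[where A = A and \<beta> = \<beta>])
      show "(\<Sum>j\<in>I. c j * \<beta> j a) = 0" if "a \<in> A" for a using that c[rule_format, of "Inl a"] by simp
    qed (rule \<beta>)
    then show ?thesis using True I(2) by (simp add: Rs_add_windows[of _ s t i] cong: sum.cong)
  next
    case False
    have "(\<Sum>j\<in>I. c j * window s t (v j) (i - s)) = 0"
    proof (rule sum_combination_eq_0[where A = B and \<beta> = \<gamma>])
      show "(\<Sum>j\<in>I. c j * \<gamma> j b) = 0" if "b \<in> B" for b using that c[rule_format, of "Inr b"] by simp
    qed (rule \<gamma>)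
    then show ?thesis using False I(2) by (simp add: Rs_add_windows[of _ s t i] cong: sum.cong)
  qed
  then show "\<forall>j\<in>I. c j = 0" using I(1) unfolding indep_family_def by blast
qed

lemma indep_family_card_le_windows:
  assumes I: "finite I" "indep_family v I" "\<forall>j\<in>I. v j \<in> Rs (s + t)"
    and A: "A \<subseteq> I" "\<forall>j\<in>I. in_family_span (\<lambda>j. window 0 s (v j)) A (window 0 s (v j))"
    and B: "B \<subseteq> I" "\<forall>j\<in>I. in_family_span (\<lambda>j. window s t (v j)) B (window s t (v j))"
  shows "card I \<le> card A + card B"
proof -
  obtain \<beta> where \<beta>: "\<And>j i. j \<in> I \<Longrightarrow> window 0 s (v j) i = (\<Sum>a\<in>A. \<beta> j a * window 0 s (v a) i)"
    using A(2) unfolding in_family_span_def by metis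
  obtain \<gamma> where \<gamma>: "\<And>j i. j \<in> I \<Longrightarrow> window s t (v j) i = (\<Sum>b\<in>B. \<gamma> j b * window s t (v b) i)"
    using B(2) unfolding in_family_span_def by metis
  have "finite A" "finite B" using A(1) B(1) I(1) finite_subset by auto
  have "card I \<le> card (A <+> B)"
    by (rule indep_family_card_le[OF _ I(1) indep_family_window_coordinates[OF I(2,3) \<beta> \<gamma>]])
      (use \<open>finite A\<close> \<open>finite B\<close> in \<open>auto split: sum.split\<close>)
  also have "\<dots> = card A + card B"
    using \<open>finite A\<close> \<open>finite B\<close> by (rule card_Plus)
  finally show ?thesis .
qed

lemma d_seq_add_le: "d_seq a n (s + t) \<le> d_seq a n s + d_seq a n t"
proof (cases "\<exists>m. contains_simplex (s + t) (D_set a n (s + t)) m")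
  case False
  then show ?thesis by (simp add: d_seq_def set_dim_def)
next
  case True
  define m where "m = d_seq a n (s + t)"
  obtain p v where S: "simplex_in (s + t) (D_set a n (s + t)) p v {..<m}"
    using True contains_simplex_set_dim unfolding m_def d_seq_def contains_simplex_iff_simplex_in by blast
  obtain A where A: "A \<subseteq> {..<m}" "indep_family (\<lambda>j. window 0 s (v j)) A"
      "\<forall>j\<in>{..<m}. in_family_span (\<lambda>j. window 0 s (v j)) A (window 0 s (v j))"
    using exists_indep_spanning_subfamily[of "{..<m}" "\<lambda>j. window 0 s (v j)"] by blast
  obtain B where B: "B \<subseteq> {..<m}" "indep_family (\<lambda>j. window s t (v j)) B"
      "\<forall>j\<in>{..<m}. in_family_span (\<lambda>j. window s t (v j)) B (window s t (v j))"
    using exists_indep_spanning_subfamily[of "{..<m}" "\<lambda>j. window s t (v j)"] by blast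
  have "simplex_in s (D_set a n s) (window 0 s p) (\<lambda>j. window 0 s (v j)) A"
    using simplex_in_window[OF S _ A(1,2)] by simp
  then have "card A \<le> d_seq a n s"
    unfolding d_seq_def using finite_subset[OF A(1)] by (blast intro: le_set_dim contains_simplex_card)
  moreover have "simplex_in t (D_set a n t) (window s t p) (\<lambda>j. window s t (v j)) B"
    using simplex_in_window[OF S _ B(1,2)] by simp
  then have "card B \<le> d_seq a n t"
    unfolding d_seq_def using finite_subset[OF B(1)] by (blast intro: le_set_dim contains_simplex_card)
  moreover have "m \<le> card A + card B"
    using indep_family_card_le_windows[of "{..<m}" v s t A B] S A B by (simp add: simplex_in_def)
  ultimately show ?thesis unfolding m_def by simp
qed

lemma subadditive_le_mult_add:
  fixes f :: "nat \<Rightarrow> real"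
  assumes "\<And>s t. f (s + t) \<le> f s + f t"
  shows "f (k * q + r) \<le> real k * f q + f r"
proof (induction k)
  case (Suc k)
  have "f (Suc k * q + r) \<le> f q + f (k * q + r)"
    using assms[of q "k * q + r"] by (simp add: add.assoc)
  with Suc show ?case by (simp add: algebra_simps)
qed simp

lemma subadditive_div_le:
  fixes f :: "nat \<Rightarrow> real"
  assumes subadd: "\<And>s t. f (s + t) \<le> f s + f t" and nonneg: "\<And>s. 0 \<le> f s" and "q \<ge> 1" "s \<ge> 1"
  shows "f s / real s \<le> f q / real q + (\<Sum>i<q. f i) / real s"
proof -
  have "f (s mod q) \<le> (\<Sum>i<q. f i)" using \<open>q \<ge> 1\<close> nonneg by (intro member_le_sum) auto
  then have "f s \<le> real (s div q) * f q + (\<Sum>i<q. f i)"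
    using subadditive_le_mult_add[OF subadd, of "s div q" q "s mod q"] by simp
  also have "real (s div q) * f q \<le> real s / real q * f q"
    using nonneg[of q] by (intro mult_right_mono) (simp_all add: of_nat_div_le_of_nat)
  finally show ?thesis using \<open>q \<ge> 1\<close> \<open>s \<ge> 1\<close> by (simp add: field_simps)
qed

lemma fekete_convergent:
  fixes f :: "nat \<Rightarrow> real"
  assumes subadd: "\<And>s t. f (s + t) \<le> f s + f t" and nonneg: "\<And>s. 0 \<le> f s"
  shows "convergent (\<lambda>s. f s / real s)"
proof -
  define L where "L = (INF s\<in>{1..}. f s / real s)"
  have bdd: "bdd_below ((\<lambda>s. f s / real s) ` {1..})"
    using nonneg by (intro bdd_belowI[of _ 0]) auto
  have L_le: "L \<le> f s / real s" if "s \<ge> 1" for s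
    unfolding L_def using that bdd by (intro cINF_lower) auto
  have "(\<lambda>s. f s / real s) \<longlonglongrightarrow> L"
  proof (rule LIMSEQ_I)
    fix r :: real assume r: "0 < r"
    obtain q where q: "q \<ge> 1" "f q / real q < L + r / 2"
      using cINF_less_iff[OF _ bdd, of "L + r / 2"] r unfolding L_def by fastforce
    define M where "M = (\<Sum>i<q. f i)"
    obtain N :: nat where N: "N > 2 * M / r" using reals_Archimedean2 by blast
    have upper: "f s / real s < L + r" if s: "s > N" for s
    proof -
      have "2 * M < r * real N" using N r by (simp add: field_simps)
      also have "\<dots> \<le> r * real s" using s r by (intro mult_left_mono) auto
      finally have "M / real s < r / 2" using s by (simp add: field_simps)
      moreover have "f s / real s \<le> f q / real q + M / real s"
        unfolding M_def using subadditive_div_le[OF subadd nonneg q(1), of s] s by simp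
      ultimately show ?thesis using q(2) by linarith
    qed
    show "\<exists>no. \<forall>s\<ge>no. norm (f s / real s - L) < r"
    proof (intro exI allI impI)
      fix s assume "s \<ge> Suc N"
      then have "f s / real s < L + r" "L \<le> f s / real s" using upper L_le by auto
      then show "norm (f s / real s - L) < r" by simp
    qed
  qed
  then show ?thesis unfolding convergent_def by blast
qed

lemma d_seq_div_convergent: "convergent (\<lambda>s. real (d_seq a n s) / real s)"
  by (rule fekete_convergent) (simp_all add: d_seq_add_le flip: of_nat_add)

section \<open>Regular vectors have entropy zero\<close>

lemma closed_under_lines_equations:
  "closed_under_lines {y. \<forall>k. P k \<longrightarrow> c k + y (f k) = e k + y (g k)}"
  unfolding closed_under_lines_def
proof (intro ballI allI impI CollectI)
  fix x y t k assume "x \<in> {y. \<forall>k. P k \<longrightarrow> c k + y (f k) = e k + y (g k)}"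
    and "y \<in> {y. \<forall>k. P k \<longrightarrow> c k + y (f k) = e k + y (g k)}" and "P k"
  then have "c k + x (f k) = e k + x (g k)" "c k + y (f k) = e k + y (g k)" by auto
  then have "(1 - t) * (c k + x (f k)) + t * (c k + y (f k)) = (1 - t) * (e k + x (g k)) + t * (e k + y (g k))"
    by simp
  then show "c k + ((1 - t) * x (f k) + t * y (f k)) = e k + ((1 - t) * x (g k) + t * y (g k))"
    by (simp add: algebra_simps)
qed

lemma indep_family_restrict:
  assumes indep: "indep_family v A" and supp: "\<forall>j\<in>A. v j \<in> Rs s"
    and copies: "\<And>i. i \<in> {1..s} - U \<Longrightarrow> \<exists>i'<i. \<forall>j\<in>A. v j i = v j i'"
  shows "indep_family (\<lambda>j i. if i \<in> U then v j i else 0) A"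
  unfolding indep_family_def
proof (intro allI impI)
  fix c assume c: "\<forall>i. (\<Sum>j\<in>A. c j * (if i \<in> U then v j i else 0)) = 0"
  have "(\<Sum>j\<in>A. c j * v j i) = 0" for i
  proof (induction i rule: less_induct)
    case (less i)
    consider "i \<notin> {1..s}" | "i \<in> U" | "i \<in> {1..s} - U" by blast
    then show ?case
    proof cases
      case 1
      then show ?thesis using supp by (simp add: Rs_def)
    next
      case 2
      then show ?thesis using c[rule_format, of i] by simp
    next
      case 3
      then obtain i' where "i' < i" "\<forall>j\<in>A. v j i = v j i'" using copies by blast
      then show ?thesis using less.IH[of i'] by simp
    qed
  qed
  then show "\<forall>j\<in>A. c j = 0" using indep unfolding indep_family_def by blast
qed

text \<open>Normal form of a regular vector (lemma \<open>regular_imp_regular_vector\<close>): the support is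
  \<open>{0, d, \<dots>, d m}\<close>, and all of its points being vertices of the Newton polygon amounts to strict
  convexity of \<open>b j = a (d j)\<close>.\<close>

locale regular_vector =
  fixes a :: "nat \<Rightarrow> ereal" and n d m :: nat and b :: "nat \<Rightarrow> real"
  assumes n_eq: "n = d * m" and d_pos: "d \<ge> 1"
    and a_support: "\<And>j. j \<le> m \<Longrightarrow> a (d * j) = ereal (b j)"
    and a_off_support: "\<And>i. i \<le> n \<Longrightarrow> (\<forall>j\<le>m. i \<noteq> d * j) \<Longrightarrow> a i = \<infinity>"
    and strictly_convex: "\<And>j. 0 < j \<Longrightarrow> j < m \<Longrightarrow> 2 * b j < b (j - 1) + b (j + 1)"
begin

lemma slope_strict_mono:
  assumes "1 \<le> j1" "j1 < j2" "j2 \<le> m"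
  shows "b j1 - b (j1 - 1) < b j2 - b (j2 - 1)"
  using assms
proof (induction j2)
  case (Suc j)
  have "2 * b j < b (j - 1) + b (j + 1)" using strictly_convex[of j] Suc.prems by simp
  then show ?case using Suc by (cases "j1 = j") auto
qed simp

definition window_term :: "(nat \<Rightarrow> real) \<Rightarrow> nat \<Rightarrow> nat \<Rightarrow> real" where
  "window_term z k j = b j + z (k + 1 + d * j)"

definition is_min :: "(nat \<Rightarrow> real) \<Rightarrow> nat \<Rightarrow> nat \<Rightarrow> bool" where
  "is_min z k j \<longleftrightarrow> j \<le> m \<and> (\<forall>j'\<le>m. window_term z k j \<le> window_term z k j')"

definition first_min :: "(nat \<Rightarrow> real) \<Rightarrow> nat \<Rightarrow> nat" where
  "first_min z k = (LEAST j. is_min z k j)"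

definition last_min :: "(nat \<Rightarrow> real) \<Rightarrow> nat \<Rightarrow> nat" where
  "last_min z k = (GREATEST j. is_min z k j)"

lemma minimiser_in_support:
  assumes "i \<le> n" and "\<forall>l\<le>n. a i + ereal (z (k+1+i)) \<le> a l + ereal (z (k+1+l))"
  shows "\<exists>j. i = d * j \<and> is_min z k j"
proof -
  have "a i + ereal (z (k+1+i)) \<le> a 0 + ereal (z (k+1))" using assms by fastforce
  then have "a i \<noteq> \<infinity>" using a_support[of 0] by auto
  then obtain j where j: "j \<le> m" "i = d * j" using a_off_support assms(1) by blast
  have "window_term z k j \<le> window_term z k j'" if "j' \<le> m" for j'
  proof -
    have "d * j' \<le> n" using that n_eq by simp
    then show ?thesis
      using assms(2) a_support[OF j(1)] a_support[OF that] j(2) by (force simp: window_term_def)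
  qed
  then show ?thesis using j by (auto simp: is_min_def)
qed

lemma two_minimisers:
  assumes "z \<in> D_set a n s" "k + n + 1 \<le> s"
  shows "\<exists>j1 j2. j1 < j2 \<and> is_min z k j1 \<and> is_min z k j2"
proof -
  obtain i i' where "i \<le> n" "i' \<le> n" "i \<noteq> i'"
    "\<forall>l\<le>n. a i + ereal (z (k+1+i)) \<le> a l + ereal (z (k+1+l))"
    "\<forall>l\<le>n. a i' + ereal (z (k+1+i')) \<le> a l + ereal (z (k+1+l))"
    using assms unfolding D_set_def by blast
  then obtain j j' where "i = d * j" "is_min z k j" "i' = d * j'" "is_min z k j'"
    using minimiser_in_support by meson
  moreover have "j \<noteq> j'" using \<open>i \<noteq> i'\<close> calculation by blast
  ultimately show ?thesis by (cases j j' rule: linorder_cases) auto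
qed

lemma first_last_min:
  assumes "z \<in> D_set a n s" "k + n + 1 \<le> s"
  shows "is_min z k (first_min z k)" "is_min z k (last_min z k)" "first_min z k < last_min z k"
    and "\<And>j. is_min z k j \<Longrightarrow> first_min z k \<le> j" "\<And>j. is_min z k j \<Longrightarrow> j \<le> last_min z k"
proof -
  obtain j1 j2 where j: "j1 < j2" "is_min z k j1" "is_min z k j2" using two_minimisers[OF assms] by blast
  have bound: "\<And>j. is_min z k j \<Longrightarrow> j \<le> m" by (simp add: is_min_def)
  show "is_min z k (first_min z k)" unfolding first_min_def by (rule LeastI[of "is_min z k", OF j(2)])
  show "is_min z k (last_min z k)" unfolding last_min_def by (rule GreatestI_nat[of "is_min z k", OF j(3) bound])
  show first: "\<And>j. is_min z k j \<Longrightarrow> first_min z k \<le> j" unfolding first_min_def by (rule Least_le)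
  show last: "\<And>j. is_min z k j \<Longrightarrow> j \<le> last_min z k" unfolding last_min_def by (rule Greatest_le_nat[OF _ bound])
  show "first_min z k < last_min z k" using first[OF j(2)] last[OF j(3)] j(1) by simp
qed

text \<open>Shifting the window by \<open>d\<close> shifts all indices of the minimum by one; strict convexity of \<open>b\<close>
  forbids the last minimiser from moving left by more than one step, and the first minimiser of the
  new window lies strictly to the left of its last one.\<close>

lemma last_min_le_shift:
  assumes "z \<in> D_set a n s" "k + d + n + 1 \<le> s"
  shows "last_min z k \<le> last_min z (k + d)"
proof -
  define h where "h = last_min z k"
  have h: "is_min z k h" "1 \<le> h" using first_last_min[OF assms(1), of k] assms(2) by (auto simp: h_def)
  have "h - 1 \<le> j" if j: "is_min z (k + d) j" for j
  proof (rule ccontr)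
    assume "\<not> h - 1 \<le> j"
    then have jh: "j + 1 < h" by simp
    have "window_term z k h \<le> window_term z k (j + 1)" using h(1) jh unfolding is_min_def by simp
    moreover have "b (j + 1) - b j < b h - b (h - 1)"
      using slope_strict_mono[of "j + 1" h] jh h(1) by (simp add: is_min_def)
    moreover have "window_term z (k + d) (h - 1) = window_term z k h - b h + b (h - 1)"
      using h(2) by (cases h) (simp_all add: window_term_def algebra_simps)
    moreover have "window_term z (k + d) j = window_term z k (j + 1) - b (j + 1) + b j"
      by (simp add: window_term_def algebra_simps)
    moreover have "h - 1 \<le> m" using h(1) by (auto simp: is_min_def)
    then have "window_term z (k + d) j \<le> window_term z (k + d) (h - 1)"
      using j unfolding is_min_def by blast
    ultimately show False by simp
  qed
  then have "h - 1 \<le> first_min z (k + d)" using first_last_min(1)[OF assms(1), of "k + d"] assms(2) by simp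
  then show ?thesis using first_last_min(3)[OF assms(1), of "k + d"] assms(2) by (simp add: h_def)
qed

lemma last_min_mono:
  assumes "z \<in> D_set a n s" "k + d * t + n + 1 \<le> s"
  shows "last_min z k \<le> last_min z (k + d * t)"
  using assms(2)
proof (induction t)
  case (Suc t)
  have "last_min z k \<le> last_min z (k + d * t)" using Suc by simp
  also have "\<dots> \<le> last_min z (k + d * t + d)" using Suc.prems by (intro last_min_le_shift[OF assms(1)]) simp
  finally show ?case by (simp add: ac_simps)
qed simp

definition eliminated :: "(nat \<Rightarrow> real) \<Rightarrow> nat \<Rightarrow> nat" where
  "eliminated z k = k + 1 + d * last_min z k"

definition free_coords :: "(nat \<Rightarrow> real) \<Rightarrow> nat \<Rightarrow> nat set" where
  "free_coords z s = {1..s} - eliminated z ` {..s - n - 1}"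

lemma inj_on_eliminated:
  assumes "z \<in> D_set a n s" "n + 1 \<le> s"
  shows "inj_on (eliminated z) {..s - n - 1}"
proof -
  have False if k: "k1 < k2" "k2 \<le> s - n - 1" and eq: "eliminated z k1 = eliminated z k2" for k1 k2
  proof -
    have eq': "k1 + d * last_min z k1 = k2 + d * last_min z k2" using eq by (simp add: eliminated_def)
    then have lt: "d * last_min z k2 < d * last_min z k1" using k(1) by linarith
    define t where "t = last_min z k1 - last_min z k2"
    have "k2 = k1 + d * t" using eq' lt by (simp add: t_def diff_mult_distrib2)
    then have "last_min z k1 \<le> last_min z k2"
      using last_min_mono[OF assms(1), of k1 t] k assms(2) by simp
    then show False using lt by (simp add: mult_less_cancel1)
  qed
  then show ?thesis
    by (intro inj_onI) (metis atMost_iff linorder_cases)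
qed

lemma card_free_coords:
  assumes "z \<in> D_set a n s" "n + 1 \<le> s"
  shows "card (free_coords z s) = n"
proof -
  have "eliminated z k \<in> {1..s}" if "k \<le> s - n - 1" for k
  proof -
    have "last_min z k \<le> m"
      using first_last_min(2)[OF assms(1), of k] that assms(2) by (simp add: is_min_def)
    then have "d * last_min z k \<le> n" using n_eq by simp
    then show ?thesis using that assms(2) by (simp add: eliminated_def)
  qed
  then have "eliminated z ` {..s - n - 1} \<subseteq> {1..s}" by auto
  moreover have "card (eliminated z ` {..s - n - 1}) = s - n"
    using card_image[OF inj_on_eliminated[OF assms]] assms(2) by simp
  ultimately show ?thesis using assms(2) by (simp add: free_coords_def card_Diff_subset)
qed

definition tie_space :: "(nat \<Rightarrow> real) \<Rightarrow> nat \<Rightarrow> (nat \<Rightarrow> real) set" where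
  "tie_space z s = {y. \<forall>k\<le>s - n - 1.
     b (first_min z k) + y (k + 1 + d * first_min z k) = b (last_min z k) + y (eliminated z k)}"

lemma closed_under_lines_tie_space: "closed_under_lines (tie_space z s)"
  unfolding tie_space_def by (rule closed_under_lines_equations)

lemma in_tie_space:
  assumes "z \<in> D_set a n s" "n + 1 \<le> s"
  shows "z \<in> tie_space z s"
  unfolding tie_space_def
proof (intro CollectI allI impI)
  fix k assume "k \<le> s - n - 1"
  then have "is_min z k (first_min z k)" "is_min z k (last_min z k)"
    using first_last_min(1,2)[OF assms(1), of k] assms(2) by simp_all
  then have "window_term z k (first_min z k) = window_term z k (last_min z k)"
    unfolding is_min_def by (meson order.antisym)
  then show "b (first_min z k) + z (k + 1 + d * first_min z k) = b (last_min z k) + z (eliminated z k)"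
    by (simp add: window_term_def eliminated_def)
qed

lemma finite_tie_spaces:
  assumes "n + 1 \<le> s"
  shows "finite ((\<lambda>z. tie_space z s) ` D_set a n s)"
proof -
  define tie_space_of where "tie_space_of M = {y. \<forall>k\<le>s - n - 1.
     b (fst (M k)) + y (k + 1 + d * fst (M k)) = b (snd (M k)) + y (k + 1 + d * snd (M k))}"
    for M :: "nat \<Rightarrow> nat \<times> nat"
  have "(\<lambda>z. tie_space z s) ` D_set a n s \<subseteq> tie_space_of ` ({..s - n - 1} \<rightarrow>\<^sub>E {..m} \<times> {..m})"
  proof
    fix T assume "T \<in> (\<lambda>z. tie_space z s) ` D_set a n s"
    then obtain z where z: "z \<in> D_set a n s" "T = tie_space z s" by blast
    define M where "M = restrict (\<lambda>k. (first_min z k, last_min z k)) {..s - n - 1}"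
    have "first_min z k \<le> m \<and> last_min z k \<le> m" if "k \<le> s - n - 1" for k
      using first_last_min(1,2)[OF z(1), of k] that assms by (simp add: is_min_def)
    then have "M \<in> {..s - n - 1} \<rightarrow>\<^sub>E {..m} \<times> {..m}" by (auto simp: M_def)
    moreover have "T = tie_space_of M"
      by (auto simp: z(2) tie_space_def tie_space_of_def M_def eliminated_def)
    ultimately show "T \<in> tie_space_of ` ({..s - n - 1} \<rightarrow>\<^sub>E {..m} \<times> {..m})" by blast
  qed
  then show ?thesis by (rule finite_subset) (simp add: finite_PiE)
qed

lemma simplex_set_subset_tie_space:
  assumes "simplex_in s (D_set a n s) p v A" "finite A" "n + 1 \<le> s"
  shows "\<exists>z\<in>D_set a n s. simplex_set p v A \<subseteq> tie_space z s"
proof -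
  have "simplex_set p v A \<subseteq> D_set a n s" using assms(1) by (simp add: simplex_in_def)
  then have cover: "simplex_set p v A \<subseteq> \<Union>((\<lambda>z. tie_space z s) ` D_set a n s)"
    using in_tie_space[OF _ assms(3)] by blast
  have nonempty: "simplex_set p v A \<noteq> {}" using simplex_set_vertices(1)[OF assms(2)] by blast
  have "\<exists>T\<in>(\<lambda>z. tie_space z s) ` D_set a n s. simplex_set p v A \<subseteq> T"
    by (rule closed_under_segments_subset_Union[OF finite_tie_spaces[OF assms(3)] _
        closed_under_segments_simplex_set cover nonempty])
      (simp add: closed_under_lines_tie_space)
  then show ?thesis by blast
qed

lemma contains_simplex_le_n:
  assumes s: "n + 1 \<le> s" and "contains_simplex s (D_set a n s) r"
  shows "r \<le> n"
proof -
  obtain p v where S: "simplex_in s (D_set a n s) p v {..<r}"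
    using assms(2) unfolding contains_simplex_iff_simplex_in by blast
  obtain z where z: "z \<in> D_set a n s" "simplex_set p v {..<r} \<subseteq> tie_space z s"
    using simplex_set_subset_tie_space[OF S _ s] by blast
  have ties: "v j (k + 1 + d * first_min z k) = v j (eliminated z k)" if "j < r" "k \<le> s - n - 1" for j k
  proof -
    have "p \<in> tie_space z s" "(\<lambda>i. p i + v j i) \<in> tie_space z s"
      using z(2) simplex_set_vertices[OF finite_lessThan] that(1) by auto
    then show ?thesis using that(2) unfolding tie_space_def by force
  qed
  have "indep_family (\<lambda>j i. if i \<in> free_coords z s then v j i else 0) {..<r}"
  proof (rule indep_family_restrict)
    fix i assume "i \<in> {1..s} - free_coords z s"
    then obtain k where k: "k \<le> s - n - 1" "i = eliminated z k" by (auto simp: free_coords_def)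
    have "first_min z k < last_min z k" using first_last_min(3)[OF z(1), of k] k(1) s by simp
    then have "k + 1 + d * first_min z k < i" using k(2) d_pos by (simp add: eliminated_def)
    then show "\<exists>i'<i. \<forall>j\<in>{..<r}. v j i = v j i'" using ties k by auto
  qed (use S in \<open>auto simp: simplex_in_def\<close>)
  then have "card {..<r} \<le> card (free_coords z s)"
    by (rule indep_family_card_le[rotated 2]) (auto simp: free_coords_def)
  then show ?thesis using card_free_coords[OF z(1) s] by simp
qed

lemma d_seq_le_n: "n + 1 \<le> s \<Longrightarrow> d_seq a n s \<le> n"
  unfolding d_seq_def by (rule set_dim_le) (rule contains_simplex_le_n)

end

lemma not_extreme_point_of_midpoint:
  assumes "x \<in> P" "y \<in> P" "x \<noteq> y"
  shows "\<not> midpoint x y extreme_point_of P"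
  using assms midpoint_in_open_segment[of x y] unfolding extreme_point_of_def by blast

lemma newton_polygon_memI:
  assumes "i \<in> supp_idx a n" "a i \<le> ereal y"
  shows "(real i, y) \<in> newton_polygon a n"
  unfolding newton_polygon_def using assms by (intro hull_inc) blast

lemma regular_strictly_convex:
  assumes reg: "regular a n" and J: "supp_idx a n = {d * k | k. k \<le> m}" and d: "d \<ge> 1"
    and b: "\<And>j. j \<le> m \<Longrightarrow> a (d * j) = ereal (b j)" and j: "0 < j" "j < m"
  shows "2 * b j < b (j - 1) + b (j + 1)"
proof (rule ccontr)
  assume "\<not> 2 * b j < b (j - 1) + b (j + 1)"
  define \<delta> where "\<delta> = b j - (b (j - 1) + b (j + 1)) / 2"
  have "0 \<le> \<delta>" using \<open>\<not> 2 * b j < _\<close> by (simp add: \<delta>_def)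
  have lifted: "(real (d * i), b i + \<delta>) \<in> newton_polygon a n" if "i \<le> m" for i
  proof (rule newton_polygon_memI)
    show "d * i \<in> supp_idx a n" using J that by auto
    show "a (d * i) \<le> ereal (b i + \<delta>)" using b[OF that] \<open>0 \<le> \<delta>\<close> by simp
  qed
  define x where "x = (real (d * (j - 1)), b (j - 1) + \<delta>)"
  define y where "y = (real (d * (j + 1)), b (j + 1) + \<delta>)"
  have "x \<in> newton_polygon a n" unfolding x_def by (rule lifted) (use j in simp)
  moreover have "y \<in> newton_polygon a n" unfolding y_def by (rule lifted) (use j in simp)
  moreover have "d * (j - 1) < d * (j + 1)" by (rule mult_strict_left_mono) (use d in auto)
  then have "fst x \<noteq> fst y"
    unfolding x_def y_def fst_conv of_nat_eq_iff by (rule less_imp_neq)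
  then have "x \<noteq> y" by blast
  moreover have "midpoint x y = (real (d * j), real_of_ereal (a (d * j)))"
    using j b[of j] by (cases j) (simp_all add: x_def y_def \<delta>_def midpoint_def algebra_simps)
  moreover have "d * j \<in> supp_idx a n" using J j by auto
  ultimately show False
    using reg not_extreme_point_of_midpoint[of x "newton_polygon a n" y] unfolding regular_def by auto
qed

lemma regular_imp_regular_vector:
  assumes reg: "regular a n" and n: "n \<ge> 1" and finite: "\<forall>i\<le>n. a i \<noteq> -\<infinity>"
    and a0: "a 0 < \<infinity>" and an: "a n < \<infinity>"
  obtains d m b where "regular_vector a n d m b"
proof -
  obtain c d m where J: "supp_idx a n = {c + d * k | k. k \<le> m}"
    using reg unfolding regular_def arith_prog_def by blast
  have "0 \<in> supp_idx a n" using a0 by (simp add: supp_idx_def)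
  then have J: "supp_idx a n = {d * k | k. k \<le> m}" using J by auto
  have "n \<in> supp_idx a n" using an by (simp add: supp_idx_def)
  then obtain k where k: "k \<le> m" "n = d * k" using J by auto
  have "d * m \<le> n" using J by (auto simp: supp_idx_def)
  then have n_eq: "n = d * m" using k by (metis le_antisym mult_le_mono2)
  then have d: "d \<ge> 1" using n by (simp add: Suc_le_eq)
  define b where "b j = real_of_ereal (a (d * j))" for j
  have a_support: "a (d * j) = ereal (b j)" if "j \<le> m" for j
  proof -
    have "d * j \<in> supp_idx a n" using J that by auto
    then show ?thesis using finite by (cases "a (d * j)") (auto simp: supp_idx_def b_def)
  qed
  have "regular_vector a n d m b"
  proof
    show "a i = \<infinity>" if "i \<le> n" "\<forall>j\<le>m. i \<noteq> d * j" for i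
      using that J by (auto simp: supp_idx_def not_less top_unique)
    show "2 * b j < b (j - 1) + b (j + 1)" if "0 < j" "j < m" for j
      using regular_strictly_convex[OF reg J d a_support that] .
  qed (use n_eq d a_support in auto)
  then show ?thesis using that by blast
qed

lemma tropical_entropy_regular:
  assumes "regular a n" "n \<ge> 1" "\<forall>i\<le>n. a i \<noteq> -\<infinity>" "a 0 < \<infinity>" "a n < \<infinity>"
  shows "tropical_entropy a n = 0"
proof -
  obtain d m b where "regular_vector a n d m b" using regular_imp_regular_vector[OF assms] .
  then have le: "d_seq a n s \<le> n" if "n + 1 \<le> s" for s using regular_vector.d_seq_le_n that by blast
  have "(\<lambda>s. real (d_seq a n s) / real s) \<longlonglongrightarrow> 0"
  proof (rule tendsto_sandwich[of "\<lambda>_. 0" _ _ "\<lambda>s. real n / real s"])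
    show "\<forall>\<^sub>F s in sequentially. real (d_seq a n s) / real s \<le> real n / real s"
      using eventually_ge_at_top[of "n + 1"] by eventually_elim (use le in \<open>auto intro!: divide_right_mono\<close>)
    show "(\<lambda>s. real n / real s) \<longlonglongrightarrow> 0" by (rule lim_const_over_n)
  qed simp_all
  then show ?thesis unfolding tropical_entropy_def by (rule limI)
qed

section \<open>Non-regular vectors: a linear lower bound for \<open>d\<^sub>s\<close>\<close>

lemma card_less_Suc_Collect:
  "card {x. x < Suc N \<and> P x} = card {x. x < N \<and> P x} + (if P N then 1 else 0)"
proof -
  have "{x. x < Suc N \<and> P x} = {x. x < N \<and> P x} \<union> (if P N then {N} else {})"
    by (auto simp: less_Suc_eq)
  then show ?thesis by auto
qed

lemma card_even_blocks:
  assumes "(\<delta>::nat) \<ge> 1"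
  shows "2 * card {\<rho>. \<rho> < N \<and> even (\<rho> div \<delta>)} =
    (if even (N div \<delta>) then N div \<delta> * \<delta> + 2 * (N mod \<delta>) else (N div \<delta> + 1) * \<delta>)"
proof (induction N)
  case (Suc N)
  show ?case
  proof (cases "Suc (N mod \<delta>) = \<delta>")
    case True
    then have "Suc N div \<delta> = Suc (N div \<delta>)" "Suc N mod \<delta> = 0" by (simp_all add: div_Suc mod_Suc)
    then show ?thesis using Suc.IH True unfolding card_less_Suc_Collect by (auto simp: algebra_simps)
  next
    case False
    then have "Suc N div \<delta> = N div \<delta>" "Suc N mod \<delta> = Suc (N mod \<delta>)" by (simp_all add: div_Suc mod_Suc)
    then show ?thesis using Suc.IH False unfolding card_less_Suc_Collect by (auto simp: algebra_simps)
  qed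
qed simp

lemma card_even_blocks_ge:
  assumes \<delta>: "(\<delta>::nat) \<ge> 1" and N: "N \<ge> \<delta>"
  shows "N + \<delta> \<le> 3 * card {\<rho>. \<rho> < N \<and> even (\<rho> div \<delta>)}"
proof -
  define q where "q = N div \<delta>"
  define C where "C = {\<rho>. \<rho> < N \<and> even (\<rho> div \<delta>)}"
  have N_eq: "N = q * \<delta> + N mod \<delta>" and "N mod \<delta> < \<delta>" using \<delta> by (simp_all add: q_def)
  then have "q \<ge> 1" using N by (cases q) auto
  have card_C: "2 * card C = (if even q then q * \<delta> + 2 * (N mod \<delta>) else (q + 1) * \<delta>)"
    using card_even_blocks[OF \<delta>, of N] by (simp add: q_def C_def)
  show ?thesis
  proof (cases "even q")
    case True
    then have "2 \<le> q" using \<open>q \<ge> 1\<close> by presburger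
    then have "2 * \<delta> \<le> q * \<delta>" by simp
    moreover have "2 * card C = q * \<delta> + 2 * (N mod \<delta>)" using card_C True by simp
    ultimately have "N + \<delta> \<le> 3 * card C" using N_eq by linarith
    then show ?thesis by (simp add: C_def)
  next
    case False
    have "\<delta> \<le> q * \<delta>" using \<open>q \<ge> 1\<close> by simp
    moreover have "2 * card C = q * \<delta> + \<delta>" using card_C False by simp
    ultimately have "N + \<delta> \<le> 3 * card C" using N_eq \<open>N mod \<delta> < \<delta>\<close> by linarith
    then show ?thesis by (simp add: C_def)
  qed
qed

text \<open>Take \<open>R\<close> to consist of alternate blocks of length \<open>\<delta>\<close>, or of length \<open>g - \<delta>\<close> if \<open>2 \<delta> > g\<close>.\<close>

lemma exists_residues_entered_by_shift:
  assumes \<delta>: "1 \<le> (\<delta>::nat)" "\<delta> < g"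
  shows "\<exists>R. g \<le> 3 * card {\<rho>. \<rho> < g \<and> \<rho> \<notin> R \<and> (\<rho> + \<delta>) mod g \<in> R}"
proof (cases "2 * \<delta> \<le> g")
  case True
  define R where "R = {\<rho>. odd (\<rho> div \<delta>)}"
  have "{\<rho>. \<rho> < g - \<delta> \<and> even (\<rho> div \<delta>)} \<subseteq> {\<rho>. \<rho> < g \<and> \<rho> \<notin> R \<and> (\<rho> + \<delta>) mod g \<in> R}"
    using \<delta> by (auto simp: R_def div_add_self2)
  then have "card {\<rho>. \<rho> < g - \<delta> \<and> even (\<rho> div \<delta>)} \<le> card {\<rho>. \<rho> < g \<and> \<rho> \<notin> R \<and> (\<rho> + \<delta>) mod g \<in> R}"
    by (rule card_mono[rotated]) simp
  moreover have "g - \<delta> + \<delta> \<le> 3 * card {\<rho>. \<rho> < g - \<delta> \<and> even (\<rho> div \<delta>)}"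
    using True \<delta> by (intro card_even_blocks_ge) auto
  ultimately have "g \<le> 3 * card {\<rho>. \<rho> < g \<and> \<rho> \<notin> R \<and> (\<rho> + \<delta>) mod g \<in> R}"
    using \<delta> by simp
  then show ?thesis by blast
next
  case False
  define \<delta>' where "\<delta>' = g - \<delta>"
  have \<delta>': "1 \<le> \<delta>'" "\<delta>' \<le> g - \<delta>'" using False \<delta> by (auto simp: \<delta>'_def)
  define R where "R = {\<rho>. even (\<rho> div \<delta>')}"
  have "(\<lambda>\<rho>. \<rho> + \<delta>') ` {\<rho>. \<rho> < g - \<delta>' \<and> even (\<rho> div \<delta>')}
      \<subseteq> {\<rho>. \<rho> < g \<and> \<rho> \<notin> R \<and> (\<rho> + \<delta>) mod g \<in> R}"
  proof
    fix x assume "x \<in> (\<lambda>\<rho>. \<rho> + \<delta>') ` {\<rho>. \<rho> < g - \<delta>' \<and> even (\<rho> div \<delta>')}"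
    then obtain \<rho> where \<rho>: "\<rho> < g - \<delta>'" "even (\<rho> div \<delta>')" "x = \<rho> + \<delta>'" by auto
    have "(x + \<delta>) mod g = \<rho>" using \<rho> \<delta> by (simp add: \<delta>'_def)
    moreover have "x div \<delta>' = \<rho> div \<delta>' + 1" using \<delta>'(1) \<rho>(3) by (simp add: div_add_self2)
    ultimately show "x \<in> {\<rho>. \<rho> < g \<and> \<rho> \<notin> R \<and> (\<rho> + \<delta>) mod g \<in> R}" using \<rho> by (auto simp: R_def)
  qed
  then have "card ((\<lambda>\<rho>. \<rho> + \<delta>') ` {\<rho>. \<rho> < g - \<delta>' \<and> even (\<rho> div \<delta>')})
      \<le> card {\<rho>. \<rho> < g \<and> \<rho> \<notin> R \<and> (\<rho> + \<delta>) mod g \<in> R}"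
    by (rule card_mono[rotated]) simp
  then have "card {\<rho>. \<rho> < g - \<delta>' \<and> even (\<rho> div \<delta>')} \<le> card {\<rho>. \<rho> < g \<and> \<rho> \<notin> R \<and> (\<rho> + \<delta>) mod g \<in> R}"
    by (simp add: card_image)
  moreover have "g - \<delta>' + \<delta>' \<le> 3 * card {\<rho>. \<rho> < g - \<delta>' \<and> even (\<rho> div \<delta>')}"
    using \<delta>' by (rule card_even_blocks_ge)
  ultimately have "g \<le> 3 * card {\<rho>. \<rho> < g \<and> \<rho> \<notin> R \<and> (\<rho> + \<delta>) mod g \<in> R}"
    using \<delta> by (simp add: \<delta>'_def)
  then show ?thesis by blast
qed

lemma two_minimisersI:
  assumes "i \<le> n" "j \<le> n" "i \<noteq> j" "f i = V" "f j = V" "\<And>l. l \<le> n \<Longrightarrow> V \<le> f l"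
  shows "\<exists>i\<le>n. \<exists>j\<le>n. i \<noteq> j \<and> (\<forall>l\<le>n. f i \<le> f l) \<and> (\<forall>l\<le>n. f j \<le> f l)"
  using assms by metis

lemma sum_mult_of_bool_eq:
  "finite F \<Longrightarrow> (\<Sum>q\<in>F. t q * of_bool (i = q)) = (if i \<in> F then t i else (0::'a::semiring_1))"
  by (simp add: if_distrib[of "\<lambda>x. _ * x"] sum.delta cong: if_cong)

text \<open>The data of a supporting line \<open>\<alpha> + \<beta> x\<close> of the Newton polygon through the finite entries at \<open>u\<close>
  and \<open>u + g\<close>, the parallel line shifted up by \<open>c\<close> through the lowest finite entry \<open>r\<close> outside the residue
  class of \<open>u\<close> modulo \<open>g\<close>, and a set \<open>R\<close> of residues entered from many residues by the shift
  \<open>\<delta> \<equiv> r - u\<close>.\<close>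

locale simplex_construction =
  fixes a :: "nat \<Rightarrow> ereal" and n u g r \<delta> :: nat and \<alpha> \<beta> c :: real and R :: "nat set"
  assumes indices: "1 \<le> g" "u + g \<le> n" "r \<le> n"
    and on_line: "a u = ereal (\<alpha> + \<beta> * real u)" "a (u + g) = ereal (\<alpha> + \<beta> * real (u + g))"
    and above_line: "\<And>i. i \<le> n \<Longrightarrow> ereal (\<alpha> + \<beta> * real i) \<le> a i"
    and on_shifted_line: "a r = ereal (\<alpha> + \<beta> * real r + c)"
    and above_shifted_line:
      "\<And>i. i \<le> n \<Longrightarrow> a i < \<infinity> \<Longrightarrow> i mod g \<noteq> u mod g \<Longrightarrow> ereal (\<alpha> + \<beta> * real i + c) \<le> a i"
    and c_nonneg: "0 \<le> c"
    and r_class: "r mod g \<noteq> u mod g" "(u + \<delta>) mod g = r mod g"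
    and R: "g \<le> 3 * card {\<rho>. \<rho> < g \<and> \<rho> \<notin> R \<and> (\<rho> + \<delta>) mod g \<in> R}"
begin

definition good :: "nat \<Rightarrow> bool" where
  "good \<rho> \<longleftrightarrow> \<rho> < g \<and> \<rho> \<notin> R \<and> (\<rho> + \<delta>) mod g \<in> R"

definition free :: "nat \<Rightarrow> nat set" where
  "free s = {q \<in> {1..s}. good (q mod g) \<and> odd (q div g)}"

definition level :: "nat \<Rightarrow> real" where
  "level q = (if q mod g \<in> R then 0 else if good (q mod g) \<and> odd (q div g) then c + 1 else c)"

definition base :: "nat \<Rightarrow> nat \<Rightarrow> real" where
  "base s q = (if q \<in> {1..s} then level q - \<beta> * real q else 0)"

definition admissible :: "nat \<Rightarrow> (nat \<Rightarrow> real) set" where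
  "admissible s = {z \<in> Rs s. (\<forall>q\<in>{1..s} - free s. z q = base s q) \<and> (\<forall>q\<in>free s. base s q \<le> z q)}"

definition window_value :: "(nat \<Rightarrow> real) \<Rightarrow> nat \<Rightarrow> nat \<Rightarrow> ereal" where
  "window_value z k l = a l + ereal (z (k + 1 + l))"

lemma level_nonneg: "0 \<le> level q"
  using c_nonneg by (simp add: level_def)

context
  fixes s z k
  assumes z: "z \<in> admissible s" and k: "k + n + 1 \<le> s"
begin

lemma window_coordinate_ge: "l \<le> n \<Longrightarrow> level (k + 1 + l) - \<beta> * real (k + 1 + l) \<le> z (k + 1 + l)"
  using z k by (cases "k + 1 + l \<in> free s") (auto simp: admissible_def base_def)

lemma window_coordinate_eq:
  "l \<le> n \<Longrightarrow> k + 1 + l \<notin> free s \<Longrightarrow> z (k + 1 + l) = level (k + 1 + l) - \<beta> * real (k + 1 + l)"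
  using z k by (auto simp: admissible_def base_def)

lemma window_value_ge:
  assumes "l \<le> n"
  shows "ereal (\<alpha> - \<beta> * real (k + 1) + level (k + 1 + l)) \<le> window_value z k l"
proof (cases "a l")
  case (real x)
  then have "\<alpha> + \<beta> * real l \<le> x" using above_line[OF assms] by simp
  then show ?thesis
    using real window_coordinate_ge[OF assms] by (simp add: window_value_def algebra_simps)
qed (use above_line[OF assms] in \<open>auto simp: window_value_def\<close>)

lemma window_value_ge_shifted:
  assumes "l \<le> n" "a l < \<infinity>" "l mod g \<noteq> u mod g"
  shows "ereal (\<alpha> - \<beta> * real (k + 1) + c + level (k + 1 + l)) \<le> window_value z k l"
proof (cases "a l")
  case (real x)
  then have "\<alpha> + \<beta> * real l + c \<le> x" using above_shifted_line[OF assms] by simp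
  then show ?thesis
    using real window_coordinate_ge[OF assms(1)] by (simp add: window_value_def algebra_simps)
qed (use assms above_line[OF assms(1)] in \<open>auto simp: window_value_def\<close>)

lemma window_value_eq:
  assumes "l \<le> n" "k + 1 + l \<notin> free s" "a l = ereal (\<alpha> + \<beta> * real l + e)"
  shows "window_value z k l = ereal (\<alpha> - \<beta> * real (k + 1) + e + level (k + 1 + l))"
  using window_coordinate_eq[OF assms(1,2)] assms(3) by (simp add: window_value_def algebra_simps)

lemma window_value_ge_c:
  assumes "(k + 1 + u) mod g \<notin> R" "l \<le> n"
  shows "ereal (\<alpha> - \<beta> * real (k + 1) + c) \<le> window_value z k l"
proof (cases "a l < \<infinity>")
  case True
  show ?thesis
  proof (cases "l mod g = u mod g")
    case True
    then have "(k + 1 + l) mod g = (k + 1 + u) mod g" by (metis mod_add_right_eq)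
    then have "c \<le> level (k + 1 + l)" using assms(1) by (simp add: level_def)
    then show ?thesis using window_value_ge[OF assms(2)] by (meson add_left_mono ereal_less_eq(3) order_trans)
  next
    case False
    then show ?thesis using window_value_ge_shifted[OF assms(2) \<open>a l < \<infinity>\<close>] level_nonneg[of "k + 1 + l"]
      by (meson ereal_less_eq(3) le_add_same_cancel1 order_trans)
  qed
qed (simp add: window_value_def top.not_eq_extremum)

lemma window_value_ge_offset: "l \<le> n \<Longrightarrow> ereal (\<alpha> - \<beta> * real (k + 1)) \<le> window_value z k l"
  using window_value_ge level_nonneg by (meson ereal_less_eq(3) le_add_same_cancel1 order_trans)

text \<open>Let \<open>x = k + 1 + u\<close> be the position of \<open>u\<close> in the window, so that \<open>u + g\<close> sits at \<open>x + g\<close>, in the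
  same residue class but in a block of the other parity. With \<open>\<kappa> = \<alpha> - \<beta> (k + 1)\<close>: if \<open>x mod g \<in> R\<close>,
  the minimum \<open>\<kappa>\<close> is attained at \<open>u\<close> and \<open>u + g\<close>. Otherwise all values are at least \<open>\<kappa> + c\<close>,
  attained at those of \<open>u\<close>, \<open>u + g\<close> that are not free, and at \<open>r\<close> if \<open>x mod g\<close> is good, since then
  \<open>r\<close> is shifted into \<open>R\<close>.\<close>

lemma window_two_minimisers_in_R:
  assumes "(k + 1 + u) mod g \<in> R"
  shows "\<exists>i\<le>n. \<exists>j\<le>n. i \<noteq> j \<and> (\<forall>l\<le>n. window_value z k i \<le> window_value z k l) \<and>
      (\<forall>l\<le>n. window_value z k j \<le> window_value z k l)"
proof (rule two_minimisersI[of u n "u + g"])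
  define x where "x = k + 1 + u"
  have positions: "k + 1 + (u + g) = x + g" "(x + g) mod g = x mod g"
    by (simp_all add: x_def[symmetric]) (simp add: x_def)
  show "u \<le> n" "u + g \<le> n" "u \<noteq> u + g" using indices by auto
  show "window_value z k u = ereal (\<alpha> - \<beta> * real (k + 1))"
    using window_value_eq[OF \<open>u \<le> n\<close> _, of 0] on_line assms by (simp add: free_def good_def level_def)
  show "window_value z k (u + g) = ereal (\<alpha> - \<beta> * real (k + 1))"
    using window_value_eq[OF \<open>u + g \<le> n\<close> _, of 0, unfolded positions(1)] on_line positions(2)
      assms[folded x_def] by (simp add: free_def good_def level_def)
qed (rule window_value_ge_offset)

lemma window_two_minimisers_not_in_R:
  assumes not_R: "(k + 1 + u) mod g \<notin> R"
  shows "\<exists>i\<le>n. \<exists>j\<le>n. i \<noteq> j \<and> (\<forall>l\<le>n. window_value z k i \<le> window_value z k l) \<and>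
      (\<forall>l\<le>n. window_value z k j \<le> window_value z k l)"
proof -
  define \<kappa> where "\<kappa> = \<alpha> - \<beta> * real (k + 1)"
  define x where "x = k + 1 + u"
  have positions: "k + 1 + (u + g) = x + g" "(x + g) mod g = x mod g" "(x + g) div g = x div g + 1"
    using indices(1) by (simp_all add: x_def[symmetric]) (simp add: x_def)
  have "u \<le> n" "u + g \<le> n" "u \<noteq> u + g" "r \<noteq> u" "r \<noteq> u + g" using indices r_class(1) by auto
  have lower: "ereal (\<kappa> + c) \<le> window_value z k l" if "l \<le> n" for l
    using window_value_ge_c[OF _ that] not_R by (simp add: \<kappa>_def)
  have not_free: "window_value z k l = ereal (\<kappa> + c)"
    if "l \<le> n" "a l = ereal (\<alpha> + \<beta> * real l + 0)" "(k + 1 + l) mod g = x mod g"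
      "\<not> (good (x mod g) \<and> odd ((k + 1 + l) div g))" for l
    using window_value_eq[OF that(1) _ that(2)] that(3,4) not_R by (simp add: \<kappa>_def x_def free_def level_def)
  have at_u: "window_value z k u = ereal (\<kappa> + c)" if "\<not> (good (x mod g) \<and> odd (x div g))"
    using not_free[OF \<open>u \<le> n\<close>] on_line that by (simp add: x_def)
  have at_ug: "window_value z k (u + g) = ereal (\<kappa> + c)" if "\<not> (good (x mod g) \<and> even (x div g))"
    using not_free[OF \<open>u + g \<le> n\<close>, unfolded positions(1)] on_line positions(2,3) that by simp
  show ?thesis
  proof (cases "good (x mod g)")
    case True
    have "(k + 1 + r) mod g = (x mod g + \<delta>) mod g"
      using r_class(2) by (metis x_def mod_add_left_eq mod_add_right_eq add.assoc)
    then have "(k + 1 + r) mod g \<in> R" using True by (simp add: good_def)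
    then have at_r: "window_value z k r = ereal (\<kappa> + c)"
      using window_value_eq[OF indices(3) _ on_shifted_line] by (simp add: \<kappa>_def free_def good_def level_def)
    show ?thesis
    proof (cases "odd (x div g)")
      case True
      then show ?thesis using at_r at_ug lower indices(3) \<open>u + g \<le> n\<close> \<open>r \<noteq> u + g\<close>
        by (intro two_minimisersI[of r n "u + g"]) auto
    next
      case False
      then show ?thesis using at_r at_u lower indices(3) \<open>u \<le> n\<close> \<open>r \<noteq> u\<close>
        by (intro two_minimisersI[of r n u]) auto
    qed
  next
    case False
    then show ?thesis using at_u at_ug lower \<open>u \<le> n\<close> \<open>u + g \<le> n\<close> \<open>u \<noteq> u + g\<close>
      by (intro two_minimisersI[of u n "u + g"]) auto
  qed
qed

lemma window_two_minimisers:
  "\<exists>i\<le>n. \<exists>j\<le>n. i \<noteq> j \<and> (\<forall>l\<le>n. window_value z k i \<le> window_value z k l) \<and>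
      (\<forall>l\<le>n. window_value z k j \<le> window_value z k l)"
  using window_two_minimisers_in_R window_two_minimisers_not_in_R by blast

end

lemma admissible_subset_D_set: "admissible s \<subseteq> D_set a n s"
  using window_two_minimisers unfolding D_set_def window_value_def by (auto simp: admissible_def)

lemma simplex_in_free: "simplex_in s (D_set a n s) (base s) (\<lambda>q i. of_bool (i = q)) (free s)"
  unfolding simplex_in_def
proof (intro conjI ballI)
  have fin: "finite (free s)" by (simp add: free_def)
  show "base s \<in> Rs s" by (simp add: base_def Rs_def)
  show "(\<lambda>i. of_bool (i = q) :: real) \<in> Rs s" if "q \<in> free s" for q
    using that by (auto simp: Rs_def free_def)
  show "indep_family (\<lambda>q i. of_bool (i = q) :: real) (free s)"
    unfolding indep_family_def
  proof (intro allI impI ballI)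
    fix c :: "nat \<Rightarrow> real" and q
    assume "\<forall>i. (\<Sum>q'\<in>free s. c q' * of_bool (i = q')) = 0" "q \<in> free s"
    then show "c q = 0" by (metis sum_mult_of_bool_eq[OF fin])
  qed
  have "simplex_set (base s) (\<lambda>q i. of_bool (i = q)) (free s) \<subseteq> admissible s"
  proof
    fix y assume "y \<in> simplex_set (base s) (\<lambda>q i. of_bool (i = q)) (free s)"
    then obtain t where t: "\<forall>q\<in>free s. 0 \<le> t q"
      and y: "y = (\<lambda>i. base s i + (\<Sum>q\<in>free s. t q * of_bool (i = q)))"
      unfolding simplex_set_def by blast
    have "y = (\<lambda>i. base s i + (if i \<in> free s then t i else 0))"
      using y unfolding sum_mult_of_bool_eq[OF fin] .
    then show "y \<in> admissible s" using t by (auto simp: admissible_def Rs_def base_def free_def)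
  qed
  then show "simplex_set (base s) (\<lambda>q i. of_bool (i = q)) (free s) \<subseteq> D_set a n s"
    using admissible_subset_D_set by blast
qed

lemma card_free_ge_blocks: "s div (2 * g) * card {\<rho>. good \<rho>} \<le> card (free s)"
proof -
  define G where "G = {\<rho>. good \<rho>}"
  define Q where "Q = s div (2 * g)"
  define f where "f = (\<lambda>(b, \<rho>). 2 * g * b + g + \<rho>)"
  have f_mod: "f (b, \<rho>) mod g = \<rho>" and f_div: "f (b, \<rho>) div g = 2 * b + 1" if "\<rho> < g" for b \<rho>
  proof -
    have f_eq: "f (b, \<rho>) = \<rho> + g * (2 * b + 1)" by (simp add: f_def algebra_simps)
    show "f (b, \<rho>) mod g = \<rho>" unfolding f_eq mod_mult_self2 using that by simp
    have "g \<noteq> 0" using indices(1) by simp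
    show "f (b, \<rho>) div g = 2 * b + 1" unfolding f_eq div_mult_self2[OF \<open>g \<noteq> 0\<close>] using that by simp
  qed
  have "f ` ({..<Q} \<times> G) \<subseteq> free s"
  proof
    fix q assume "q \<in> f ` ({..<Q} \<times> G)"
    then obtain b \<rho> where b: "b < Q" "good \<rho>" "q = f (b, \<rho>)" by (auto simp: G_def)
    then have "\<rho> < g" by (simp add: good_def)
    have "q < 2 * g * (b + 1)" using b(3) \<open>\<rho> < g\<close> by (simp add: f_def algebra_simps)
    also have "\<dots> \<le> 2 * g * Q" using b(1) by (intro mult_le_mono2) simp
    also have "\<dots> \<le> s" by (simp add: Q_def mult.commute)
    finally show "q \<in> free s"
      using b f_mod[OF \<open>\<rho> < g\<close>] f_div[OF \<open>\<rho> < g\<close>] indices(1) by (auto simp: free_def f_def)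
  qed
  moreover have "inj_on f ({..<Q} \<times> G)"
  proof (rule inj_onI)
    fix x y assume "x \<in> {..<Q} \<times> G" "y \<in> {..<Q} \<times> G" and eq: "f x = f y"
    then obtain b \<rho> b' \<rho>' where "x = (b, \<rho>)" "y = (b', \<rho>')" "\<rho> < g" "\<rho>' < g"
      by (auto simp: G_def good_def)
    then show "x = y"
      using eq f_mod[of \<rho> b] f_mod[of \<rho>' b'] f_div[of \<rho> b] f_div[of \<rho>' b'] by simp
  qed
  ultimately show ?thesis
    using card_mono[OF _ \<open>f ` _ \<subseteq> free s\<close>] card_image[of f]
    by (simp add: free_def card_cartesian_product Q_def G_def)
qed

lemma card_free_ge: "real s / 6 - real g / 3 \<le> real (card (free s))"
proof -
  define Q where "Q = s div (2 * g)"
  have "real (card {\<rho>. good \<rho>}) * real Q \<le> real (card (free s))"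
    using card_free_ge_blocks[of s] unfolding Q_def by (metis of_nat_le_iff of_nat_mult mult.commute)
  moreover have "real g \<le> 3 * real (card {\<rho>. good \<rho>})"
    using R unfolding good_def by linarith
  then have "real g / 3 * real Q \<le> real (card {\<rho>. good \<rho>}) * real Q" by (intro mult_right_mono) auto
  moreover have "real s < 2 * real g * (real Q + 1)"
  proof -
    have "s = 2 * g * Q + s mod (2 * g)" "s mod (2 * g) < 2 * g" using indices(1) by (simp_all add: Q_def)
    then have "s < 2 * g * Q + 2 * g" by linarith
    then have "real s < real (2 * g * Q + 2 * g)" by (simp only: of_nat_less_iff)
    then show ?thesis by (simp add: algebra_simps)
  qed
  then have "real s / 6 - real g / 3 < real g / 3 * real Q" by (simp add: field_simps)
  ultimately show ?thesis by linarith
qed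

lemma d_seq_ge: "real s / 6 - real g / 3 \<le> real (d_seq a n s)"
proof -
  have "card (free s) \<le> d_seq a n s"
    unfolding d_seq_def using simplex_in_free by (intro le_set_dim contains_simplex_card) (simp add: free_def)
  then show ?thesis using card_free_ge[of s] by linarith
qed

end

definition skew_support_line :: "(nat \<Rightarrow> ereal) \<Rightarrow> nat \<Rightarrow> bool" where
  "skew_support_line a n \<longleftrightarrow> (\<exists>\<alpha> \<beta> u g r. 1 \<le> g \<and> u + g \<le> n \<and> r \<le> n \<and>
     a u = ereal (\<alpha> + \<beta> * real u) \<and> a (u + g) = ereal (\<alpha> + \<beta> * real (u + g)) \<and>
     (\<forall>i\<le>n. ereal (\<alpha> + \<beta> * real i) \<le> a i) \<and> a r < \<infinity> \<and> r mod g \<noteq> u mod g)"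

lemma exists_shift_to_residue:
  fixes g r u :: nat
  assumes "1 \<le> g" "r mod g \<noteq> u mod g"
  shows "\<exists>\<delta>. 1 \<le> \<delta> \<and> \<delta> < g \<and> (u + \<delta>) mod g = r mod g"
proof -
  define \<delta> where "\<delta> = nat ((int r - int u) mod int g)"
  have \<delta>_int: "int \<delta> = (int r - int u) mod int g" using assms(1) by (simp add: \<delta>_def)
  then have "\<delta> < g" using assms(1) by (metis of_nat_less_iff pos_mod_bound of_nat_0_less_iff less_le_trans zero_less_one)
  moreover have "int ((u + \<delta>) mod g) = int (r mod g)"
    by (simp add: zmod_int \<delta>_int mod_add_right_eq)
  then have "(u + \<delta>) mod g = r mod g" by (simp only: of_nat_eq_iff)
  moreover from this have "1 \<le> \<delta>" using assms(2) by (cases \<delta>) auto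
  ultimately show ?thesis by blast
qed

lemma skew_support_line_d_seq_ge:
  assumes "skew_support_line a n"
  obtains C where "\<And>s. real s / 6 - C \<le> real (d_seq a n s)"
proof -
  obtain \<alpha> \<beta> u g r0 where indices: "1 \<le> g" "u + g \<le> n" "r0 \<le> n"
    and on_line: "a u = ereal (\<alpha> + \<beta> * real u)" "a (u + g) = ereal (\<alpha> + \<beta> * real (u + g))"
    and above_line: "\<forall>i\<le>n. ereal (\<alpha> + \<beta> * real i) \<le> a i" and r0: "a r0 < \<infinity>" "r0 mod g \<noteq> u mod g"
    using assms unfolding skew_support_line_def by blast
  define cands where "cands = {i. i \<le> n \<and> a i < \<infinity> \<and> i mod g \<noteq> u mod g}"
  define height where "height i = real_of_ereal (a i) - (\<alpha> + \<beta> * real i)" for i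
  define c where "c = Min (height ` cands)"
  have "finite cands" "r0 \<in> cands" using indices r0 by (simp_all add: cands_def)
  then obtain r where r: "r \<in> cands" "height r = c"
    unfolding c_def by (metis (no_types, lifting) Min_in empty_iff finite_imageI image_iff image_is_empty)
  have a_eq: "a i = ereal (\<alpha> + \<beta> * real i + height i)" and height_nonneg: "0 \<le> height i"
    if "i \<le> n" "a i < \<infinity>" for i
    using above_line that by (cases "a i"; force simp: height_def)+
  have "0 \<le> height r" using r(1) by (intro height_nonneg) (simp_all add: cands_def)
  then have "0 \<le> c" using r(2) by simp
  have above_shifted_line: "ereal (\<alpha> + \<beta> * real i + c) \<le> a i"
    if "i \<le> n" "a i < \<infinity>" "i mod g \<noteq> u mod g" for i
  proof -
    have "c \<le> height i" using that \<open>finite cands\<close> by (simp add: c_def cands_def)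
    then show ?thesis using a_eq[OF that(1,2)] by simp
  qed
  have "r mod g \<noteq> u mod g" using r(1) by (simp add: cands_def)
  then obtain \<delta> where \<delta>: "1 \<le> \<delta>" "\<delta> < g" "(u + \<delta>) mod g = r mod g"
    using exists_shift_to_residue[OF indices(1)] by blast
  then obtain R where R: "g \<le> 3 * card {\<rho>. \<rho> < g \<and> \<rho> \<notin> R \<and> (\<rho> + \<delta>) mod g \<in> R}"
    using exists_residues_entered_by_shift \<delta>(1,2) by blast
  have "a r = ereal (\<alpha> + \<beta> * real r + height r)" using r(1) by (intro a_eq) (simp_all add: cands_def)
  then have a_r: "a r = ereal (\<alpha> + \<beta> * real r + c)" using r(2) by simp
  interpret simplex_construction a n u g r \<delta> \<alpha> \<beta> c R
    by unfold_locales (use indices on_line above_line above_shifted_line a_r \<open>0 \<le> c\<close>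
        \<open>r mod g \<noteq> u mod g\<close> \<delta>(3) R r in \<open>auto simp: cands_def\<close>)
  show ?thesis using that d_seq_ge by blast
qed

lemma tropical_entropy_ge:
  assumes "\<And>s. \<epsilon> * real s - C \<le> real (d_seq a n s)"
  shows "\<epsilon> \<le> tropical_entropy a n"
proof -
  have "(\<lambda>s. real (d_seq a n s) / real s) \<longlonglongrightarrow> tropical_entropy a n"
    unfolding tropical_entropy_def using d_seq_div_convergent convergent_LIMSEQ_iff by blast
  moreover have "(\<lambda>s. \<epsilon> - C / real s) \<longlonglongrightarrow> \<epsilon>"
    using tendsto_diff[OF tendsto_const lim_const_over_n] by simp
  moreover have "\<epsilon> - C / real s \<le> real (d_seq a n s) / real s" if "s \<ge> 1" for s
  proof -
    have "\<epsilon> - C / real s = (\<epsilon> * real s - C) / real s" using that by (simp add: field_simps)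
    also have "\<dots> \<le> real (d_seq a n s) / real s" using assms[of s] by (simp add: divide_right_mono)
    finally show ?thesis .
  qed
  ultimately show ?thesis by (intro LIMSEQ_le) auto
qed

lemma exists_uniform_slack:
  assumes "finite J" "\<And>i. i \<in> J \<Longrightarrow> i \<noteq> i0 \<Longrightarrow> 0 < gap i"
  shows "\<exists>\<kappa>>0. \<forall>i\<in>J - {i0}. \<kappa> * \<bar>real i - real i0\<bar> \<le> gap i"
proof -
  define \<kappa> where "\<kappa> = Min (insert 1 ((\<lambda>i. gap i / \<bar>real i - real i0\<bar>) ` (J - {i0})))"
  have "0 < \<kappa>" using assms by (auto simp: \<kappa>_def)
  moreover have "\<kappa> * \<bar>real i - real i0\<bar> \<le> gap i" if "i \<in> J" "i \<noteq> i0" for i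
  proof -
    have "\<kappa> \<le> gap i / \<bar>real i - real i0\<bar>" using assms(1) that by (simp add: \<kappa>_def)
    then show ?thesis using that(2) by (simp add: field_simps)
  qed
  ultimately show ?thesis by blast
qed

lemma newton_polygon_above_cone:
  assumes b: "\<And>i. i \<in> supp_idx a n \<Longrightarrow> a i = ereal (b i)" and "0 \<le> \<kappa>"
    and slack: "\<And>i. i \<in> supp_idx a n \<Longrightarrow> \<kappa> * \<bar>real i - real i0\<bar> \<le> b i - b i0 - \<sigma> * (real i - real i0)"
    and xy: "(x, y) \<in> newton_polygon a n"
  shows "\<sigma> * (x - real i0) + \<kappa> * \<bar>x - real i0\<bar> \<le> y - b i0"
proof -
  define H where "H \<tau> = {(x, y). b i0 + \<tau> * (x - real i0) \<le> y}" for \<tau>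
  have "H \<tau> = {p. inner (\<tau>, -1) p \<le> \<tau> * real i0 - b i0}" for \<tau>
    by (auto simp: H_def inner_prod_def algebra_simps)
  then have convex_H: "convex (H \<tau>)" for \<tau> by (simp add: convex_halfspace_le)
  have rays: "{(real i, y) | y. a i \<le> ereal y} \<subseteq> H (\<sigma> + \<kappa>) \<inter> H (\<sigma> - \<kappa>)" if "i \<in> supp_idx a n" for i
  proof -
    define d where "d = real i - real i0"
    have "\<kappa> * d \<le> \<kappa> * \<bar>d\<bar>" "\<kappa> * (- d) \<le> \<kappa> * \<bar>d\<bar>"
      using mult_left_mono[OF abs_ge_self[of d] \<open>0 \<le> \<kappa>\<close>] mult_left_mono[OF abs_ge_minus_self[of d] \<open>0 \<le> \<kappa>\<close>]
      by simp_all
    then have "b i0 + (\<sigma> + \<kappa>) * d \<le> b i" "b i0 + (\<sigma> - \<kappa>) * d \<le> b i"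
      using slack[OF that] unfolding d_def[symmetric] by (simp_all add: algebra_simps)
    then show ?thesis using b that by (auto simp: H_def d_def)
  qed
  have "(\<Union>i\<in>supp_idx a n. {(real i, y) | y. a i \<le> ereal y}) \<subseteq> H (\<sigma> + \<kappa>) \<inter> H (\<sigma> - \<kappa>)"
    by (rule UN_least) (rule rays)
  then have "newton_polygon a n \<subseteq> H (\<sigma> + \<kappa>) \<inter> H (\<sigma> - \<kappa>)"
    unfolding newton_polygon_def using convex_Int[OF convex_H convex_H] by (rule hull_minimal)
  then have "b i0 + (\<sigma> + \<kappa>) * (x - real i0) \<le> y" "b i0 + (\<sigma> - \<kappa>) * (x - real i0) \<le> y"
    using xy by (auto simp: H_def)
  moreover have "(\<sigma> + \<kappa>) * (x - real i0) = \<sigma> * (x - real i0) + \<kappa> * (x - real i0)"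
    "(\<sigma> - \<kappa>) * (x - real i0) = \<sigma> * (x - real i0) + \<kappa> * (real i0 - x)"
    by (simp_all add: algebra_simps)
  moreover have "\<bar>x - real i0\<bar> = x - real i0 \<or> \<bar>x - real i0\<bar> = real i0 - x" by linarith
  ultimately show ?thesis by auto
qed

lemma extreme_point_of_newton_polygonI:
  assumes i0: "i0 \<in> supp_idx a n" and b: "\<And>i. i \<in> supp_idx a n \<Longrightarrow> a i = ereal (b i)"
    and strict: "\<And>i. i \<in> supp_idx a n \<Longrightarrow> i \<noteq> i0 \<Longrightarrow> b i0 + \<sigma> * (real i - real i0) < b i"
  shows "(real i0, b i0) extreme_point_of newton_polygon a n"
proof -
  have fin: "finite (supp_idx a n)" by (simp add: supp_idx_def)
  have pos: "0 < b i - b i0 - \<sigma> * (real i - real i0)" if "i \<in> supp_idx a n" "i \<noteq> i0" for i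
    using strict[OF that] by simp
  obtain \<kappa> where "0 < \<kappa>"
    and slack: "\<forall>i\<in>supp_idx a n - {i0}. \<kappa> * \<bar>real i - real i0\<bar> \<le> b i - b i0 - \<sigma> * (real i - real i0)"
    using exists_uniform_slack[of _ i0 "\<lambda>i. b i - b i0 - \<sigma> * (real i - real i0)", OF fin pos] by blast
  then have "\<kappa> * \<bar>real i - real i0\<bar> \<le> b i - b i0 - \<sigma> * (real i - real i0)" if "i \<in> supp_idx a n" for i
    using that by (cases "i = i0") auto
  then have above: "\<sigma> * (x - real i0) + \<kappa> * \<bar>x - real i0\<bar> \<le> y - b i0"
    if "(x, y) \<in> newton_polygon a n" for x y
    using newton_polygon_above_cone[OF b _ _ that] \<open>0 < \<kappa>\<close> by simp
  show ?thesis
  proof (rule extreme_point_of_Int_supporting_hyperplane_ge[where a = "(- \<sigma>, 1)" and b = "b i0 - \<sigma> * real i0"])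
    have "(real i0, b i0) \<in> newton_polygon a n" using i0 b by (intro newton_polygon_memI) auto
    moreover have "p = (real i0, b i0)"
      if "p \<in> newton_polygon a n" "inner (- \<sigma>, 1) p = b i0 - \<sigma> * real i0" for p
    proof -
      obtain x y where p: "p = (x, y)" by (cases p)
      have "y - b i0 = \<sigma> * (x - real i0)" using that(2) p by (simp add: algebra_simps)
      moreover have "\<sigma> * (x - real i0) + \<kappa> * \<bar>x - real i0\<bar> \<le> y - b i0" using above that(1) p by simp
      ultimately have "\<kappa> * \<bar>x - real i0\<bar> \<le> 0" by linarith
      then have "x = real i0" using \<open>0 < \<kappa>\<close> by (simp add: mult_le_0_iff)
      then show ?thesis using \<open>y - b i0 = _\<close> p by simp
    qed
    moreover have "inner (- \<sigma>, 1) (real i0, b i0) = b i0 - \<sigma> * real i0" by simp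
    ultimately show "newton_polygon a n \<inter> {p. inner (- \<sigma>, 1) p = b i0 - \<sigma> * real i0} = {(real i0, b i0)}"
      by blast
    show "b i0 - \<sigma> * real i0 \<le> inner (- \<sigma>, 1) p" if "p \<in> newton_polygon a n" for p
    proof -
      obtain x y where p: "p = (x, y)" by (cases p)
      have "\<sigma> * (x - real i0) + \<kappa> * \<bar>x - real i0\<bar> \<le> y - b i0" using above that p by simp
      moreover have "0 \<le> \<kappa> * \<bar>x - real i0\<bar>" using \<open>0 < \<kappa>\<close> by simp
      ultimately show ?thesis using p by (simp add: algebra_simps)
    qed
  qed
qed


text \<open>Walking along the lower boundary of the Newton polygon from \<open>0\<close>, each edge of minimal slope
  starting at a vertex \<open>u\<close> touches the support exactly at \<open>u + g\<close>, where \<open>g = period\<close> is the length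
  of the first edge: without skew support lines, a touching point \<open>w\<close> satisfies \<open>(w - u) dvd g\<close> (as \<open>0\<close>
  and \<open>g\<close> lie in the residue class of \<open>u\<close>) and \<open>g dvd (w - u)\<close>.\<close>

locale no_skew_support_line =
  fixes a :: "nat \<Rightarrow> ereal" and n :: nat
  assumes n_pos: "n \<ge> 1" and not_minus_infinity: "\<forall>i\<le>n. a i \<noteq> -\<infinity>"
    and a0: "a 0 < \<infinity>" and an: "a n < \<infinity>"
    and no_skew: "\<not> skew_support_line a n"
begin

abbreviation J :: "nat set" where
  "J \<equiv> supp_idx a n"

definition b :: "nat \<Rightarrow> real" where
  "b i = real_of_ereal (a i)"

definition supports :: "nat \<Rightarrow> real \<Rightarrow> bool" where
  "supports u \<sigma> \<longleftrightarrow> (\<forall>i\<in>J. b u + \<sigma> * (real i - real u) \<le> b i)"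

lemma finite_J: "finite J"
  by (simp add: supp_idx_def)

lemma J_le: "i \<in> J \<Longrightarrow> i \<le> n"
  by (simp add: supp_idx_def)

lemma a_eq_b: "i \<in> J \<Longrightarrow> a i = ereal (b i)"
  using not_minus_infinity by (cases "a i") (auto simp: supp_idx_def b_def)

lemma a_infinite: "i \<le> n \<Longrightarrow> i \<notin> J \<Longrightarrow> a i = \<infinity>"
  by (simp add: supp_idx_def not_less top_unique)

lemma zero_in_J: "0 \<in> J" and n_in_J: "n \<in> J"
  using a0 an by (simp_all add: supp_idx_def)

lemma touching_support_mod_eq:
  assumes u: "u \<in> J" and w: "w \<in> J" "u < w" and \<sigma>: "supports u \<sigma>" "b w = b u + \<sigma> * (real w - real u)"
    and r: "r \<in> J"
  shows "r mod (w - u) = u mod (w - u)"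
proof (rule ccontr)
  assume r_mod: "r mod (w - u) \<noteq> u mod (w - u)"
  define \<alpha> where "\<alpha> = b u - \<sigma> * real u"
  have "ereal (\<alpha> + \<sigma> * real i) \<le> a i" if "i \<le> n" for i
  proof (cases "i \<in> J")
    case True
    then show ?thesis using \<sigma>(1) a_eq_b by (simp add: supports_def \<alpha>_def algebra_simps)
  qed (simp add: a_infinite that)
  moreover have "a u = ereal (\<alpha> + \<sigma> * real u)" "a (u + (w - u)) = ereal (\<alpha> + \<sigma> * real (u + (w - u)))"
    using a_eq_b u w \<sigma>(2) by (simp_all add: \<alpha>_def algebra_simps)
  ultimately have "skew_support_line a n"
    unfolding skew_support_line_def using w J_le[OF w(1)] J_le[OF r] a_eq_b[OF r] r_mod
    by (intro exI[of _ \<alpha>] exI[of _ \<sigma>] exI[of _ u] exI[of _ "w - u"] exI[of _ r]) auto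
  with no_skew show False ..
qed

lemma exists_min_slope_edge:
  assumes "u \<in> J" "u < n"
  shows "\<exists>\<sigma> w. w \<in> J \<and> u < w \<and> b w = b u + \<sigma> * (real w - real u) \<and>
           (\<forall>i\<in>J. u < i \<longrightarrow> b u + \<sigma> * (real i - real u) \<le> b i)"
proof -
  define W where "W = {i \<in> J. u < i}"
  define slope where "slope i = (b i - b u) / (real i - real u)" for i
  have "finite W" "n \<in> W" using finite_J n_in_J assms by (simp_all add: W_def)
  then obtain w where w: "w \<in> W" "slope w = Min (slope ` W)"
    by (metis (mono_tags, lifting) Min_in empty_iff finite_imageI image_iff image_is_empty)
  have "b u + slope w * (real i - real u) \<le> b i" if "i \<in> W" for i
  proof -
    have "slope w \<le> slope i" using w(2) \<open>finite W\<close> that by simp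
    then show ?thesis using that by (simp add: W_def slope_def field_simps)
  qed
  moreover have "b w = b u + slope w * (real w - real u)" using w(1) by (simp add: W_def slope_def)
  ultimately show ?thesis using w(1) unfolding W_def by blast
qed

lemma supports_from_right:
  assumes "supports u \<sigma>'" "\<sigma>' \<le> \<sigma>" "\<forall>i\<in>J. u < i \<longrightarrow> b u + \<sigma> * (real i - real u) \<le> b i"
  shows "supports u \<sigma>"
  unfolding supports_def
proof
  fix i assume i: "i \<in> J"
  show "b u + \<sigma> * (real i - real u) \<le> b i"
  proof (cases "u < i")
    case False
    then have "\<sigma> * (real i - real u) \<le> \<sigma>' * (real i - real u)"
      using assms(2) by (simp add: mult_right_mono_neg)
    moreover have "b u + \<sigma>' * (real i - real u) \<le> b i" using assms(1) i by (simp add: supports_def)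
    ultimately show ?thesis by linarith
  qed (use assms(3) i in blast)
qed

definition period :: nat where
  "period = Min (J - {0})"

lemma period: "period \<in> J" "1 \<le> period" "\<And>r. r \<in> J \<Longrightarrow> period dvd r" and supports_0: "\<exists>\<sigma>. supports 0 \<sigma>"
proof -
  obtain \<sigma> w where w: "w \<in> J" "0 < w" "b w = b 0 + \<sigma> * (real w - real 0)"
    and right: "\<forall>i\<in>J. 0 < i \<longrightarrow> b 0 + \<sigma> * (real i - real 0) \<le> b i"
    using exists_min_slope_edge[OF zero_in_J] n_pos by auto
  have "supports 0 \<sigma>" using right by (auto simp: supports_def intro: gr0I)
  then have dvd: "w dvd r" if "r \<in> J" for r
    using touching_support_mod_eq[OF zero_in_J w(1,2) _ w(3) that] by (simp add: dvd_eq_mod_eq_0)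
  have "period \<in> J - {0}" unfolding period_def using finite_J w by (intro Min_in) auto
  moreover have "period \<le> w" unfolding period_def using finite_J w by (intro Min_le) auto
  ultimately have "period = w" using dvd[of period] by (simp add: dvd_imp_le le_antisym)
  then show "period \<in> J" "1 \<le> period" "\<And>r. r \<in> J \<Longrightarrow> period dvd r" using w dvd by auto
  show "\<exists>\<sigma>. supports 0 \<sigma>" using \<open>supports 0 \<sigma>\<close> by blast
qed

lemma next_vertex:
  assumes u: "u \<in> J" "u < n" "period dvd u" and "supports u \<sigma>'"
  shows "\<exists>\<sigma>. u + period \<in> J \<and> supports u \<sigma> \<and> b (u + period) = b u + \<sigma> * real period \<and>
           (\<forall>i\<in>J. u < i \<longrightarrow> i \<noteq> u + period \<longrightarrow> b u + \<sigma> * (real i - real u) < b i)"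
proof -
  obtain \<sigma> w where w: "w \<in> J" "u < w" "b w = b u + \<sigma> * (real w - real u)"
    and right: "\<forall>i\<in>J. u < i \<longrightarrow> b u + \<sigma> * (real i - real u) \<le> b i"
    using exists_min_slope_edge[OF u(1,2)] by blast
  have "\<sigma>' * (real w - real u) \<le> \<sigma> * (real w - real u)"
    using assms(4) w by (auto simp: supports_def)
  then have "\<sigma>' \<le> \<sigma>" using w(2) by simp
  then have supp: "supports u \<sigma>" using supports_from_right[OF assms(4) _ right] by blast
  have touching: "w' = u + period" if w': "w' \<in> J" "u < w'" "b w' = b u + \<sigma> * (real w' - real u)" for w'
  proof -
    have "0 mod (w' - u) = u mod (w' - u)" "period mod (w' - u) = u mod (w' - u)"
      using touching_support_mod_eq[OF u(1) w'(1,2) supp w'(3)] zero_in_J period(1) by blast+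
    then have "(w' - u) dvd period" by (simp add: dvd_eq_mod_eq_0)
    moreover have "period dvd (w' - u)" using period(3)[OF w'(1)] u(3) by (simp add: dvd_diff_nat)
    ultimately have "w' - u = period" by (rule dvd_antisym)
    then show ?thesis using w'(2) by simp
  qed
  have "b u + \<sigma> * (real i - real u) < b i" if "i \<in> J" "u < i" "i \<noteq> u + period" for i
    using right touching[of i] that by force
  then show ?thesis using supp w touching[OF w] by auto
qed

lemma multiple_in_J: "k * period \<le> n \<Longrightarrow> k * period \<in> J \<and> (\<exists>\<sigma>. supports (k * period) \<sigma>)"
proof (induction k)
  case 0
  then show ?case using zero_in_J supports_0 by simp
next
  case (Suc k)
  then have "k * period < n" using period(2) by simp
  with Suc.IH obtain \<sigma>' where "k * period \<in> J" "supports (k * period) \<sigma>'" by auto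
  then obtain \<sigma> where \<sigma>: "k * period + period \<in> J" "supports (k * period) \<sigma>"
    "b (k * period + period) = b (k * period) + \<sigma> * real period"
    using next_vertex[OF _ \<open>k * period < n\<close> dvd_triv_right] by blast
  have "supports (k * period + period) \<sigma>"
    using \<sigma>(2,3) by (auto simp: supports_def algebra_simps)
  then show ?case using \<sigma>(1) by (auto simp: add.commute)
qed

definition K :: nat where
  "K = n div period"

lemma n_eq: "n = K * period"
  using period(3)[OF n_in_J] by (simp add: K_def)

lemma J_eq: "J = {period * k | k. k \<le> K}"
proof (intro equalityI subsetI)
  fix i assume i: "i \<in> J"
  then obtain k where "i = period * k" using period(3) by blast
  moreover have "k * period \<le> K * period" using J_le[OF i] n_eq calculation by (simp add: mult.commute)
  then have "k \<le> K" using period(2) by simp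
  ultimately show "i \<in> {period * k | k. k \<le> K}" by blast
next
  fix i assume "i \<in> {period * k | k. k \<le> K}"
  then obtain k where "i = period * k" "k \<le> K" by blast
  then show "i \<in> J" using multiple_in_J[of k] n_eq mult_le_mono1[of k K period] by (simp add: mult.commute)
qed

definition slope :: "nat \<Rightarrow> real" where
  "slope k = (b ((k + 1) * period) - b (k * period)) / real period"

lemma b_next: "b ((k + 1) * period) = b (k * period) + slope k * real period"
  using period(2) by (simp add: slope_def)

lemma slope_edge:
  assumes "(k + 1) * period \<le> n"
  shows "supports (k * period) (slope k)"
    and "\<And>i. i \<in> J \<Longrightarrow> k * period < i \<Longrightarrow> i \<noteq> (k + 1) * period \<Longrightarrow>
      b (k * period) + slope k * (real i - real (k * period)) < b i"
proof -
  have "k * period < n" using assms period(2) by simp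
  then obtain \<sigma>' where "k * period \<in> J" "supports (k * period) \<sigma>'" using multiple_in_J[of k] by auto
  then obtain \<sigma> where \<sigma>: "supports (k * period) \<sigma>" "b (k * period + period) = b (k * period) + \<sigma> * real period"
    "\<forall>i\<in>J. k * period < i \<longrightarrow> i \<noteq> k * period + period \<longrightarrow> b (k * period) + \<sigma> * (real i - real (k * period)) < b i"
    using next_vertex[OF _ \<open>k * period < n\<close> dvd_triv_right] by blast
  have "\<sigma> = slope k" using \<sigma>(2) period(2) by (simp add: slope_def add.commute)
  then show "supports (k * period) (slope k)"
    "\<And>i. i \<in> J \<Longrightarrow> k * period < i \<Longrightarrow> i \<noteq> (k + 1) * period \<Longrightarrow>
      b (k * period) + slope k * (real i - real (k * period)) < b i"
    using \<sigma>(1,3) by (auto simp: add.commute)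
qed

lemma slope_strict_mono:
  assumes "1 \<le> k" "(k + 1) * period \<le> n"
  shows "slope (k - 1) < slope k"
proof -
  obtain k' where k': "k = k' + 1" using assms(1) by (cases k) auto
  have "(k' + 2) * period \<in> J" using multiple_in_J[of "k' + 2"] assms k' by (simp add: algebra_simps)
  then have "b (k' * period) + slope k' * (real ((k' + 2) * period) - real (k' * period)) < b ((k' + 2) * period)"
    using slope_edge(2)[of k' "(k' + 2) * period"] assms k' period(2) by simp
  moreover have "b ((k' + 2) * period) = b (k' * period) + slope k' * real period + slope (k' + 1) * real period"
    using b_next[of k'] b_next[of "k' + 1"] by (simp add: algebra_simps numeral_2_eq_2)
  ultimately have "slope k' * real period < slope (k' + 1) * real period" by (simp add: algebra_simps)
  then show ?thesis using k' period(2) by simp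
qed

definition vertex_slope :: "nat \<Rightarrow> real" where
  "vertex_slope k = (if k = 0 then slope 0 - 1 else if k < K then (slope (k - 1) + slope k) / 2 else slope (K - 1) + 1)"

lemma Suc_mult_period_le:
  assumes "k < K"
  shows "(k + 1) * period \<le> n"
proof -
  have "(k + 1) * period \<le> K * period" using assms by (intro mult_le_mono1) simp
  then show ?thesis using n_eq by simp
qed

lemma vertex_slope_less: "k < K \<Longrightarrow> vertex_slope k < slope k"
  using slope_strict_mono[of k] Suc_mult_period_le[of k] by (cases "k = 0") (auto simp: vertex_slope_def)

lemma vertex_slope_greater: "0 < k \<Longrightarrow> k \<le> K \<Longrightarrow> slope (k - 1) < vertex_slope k"
  using slope_strict_mono[of k] Suc_mult_period_le[of k] by (cases "k < K") (auto simp: vertex_slope_def)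

lemma vertex_extreme:
  assumes "k \<le> K"
  shows "(real (k * period), b (k * period)) extreme_point_of newton_polygon a n"
proof (rule extreme_point_of_newton_polygonI[where \<sigma> = "vertex_slope k"])
  show "k * period \<in> J" using J_eq assms by (auto simp: mult.commute)
  show "a i = ereal (b i)" if "i \<in> J" for i using a_eq_b that .
  fix i assume i: "i \<in> J" "i \<noteq> k * period"
  show "b (k * period) + vertex_slope k * (real i - real (k * period)) < b i"
  proof (cases "k * period < i")
    case True
    then have "k < K" using J_le[OF i(1)] n_eq by (metis le_less_trans mult_le_cancel2 not_le)
    then have "(k + 1) * period \<le> n" by (rule Suc_mult_period_le)
    then have "b (k * period) + slope k * (real i - real (k * period)) \<le> b i"
      using slope_edge(1) i(1) by (auto simp: supports_def)
    moreover have "vertex_slope k * (real i - real (k * period)) < slope k * (real i - real (k * period))"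
      using vertex_slope_less[OF \<open>k < K\<close>] of_nat_less_iff[where 'a=real, THEN iffD2, OF True]
      by (intro mult_strict_right_mono) auto
    ultimately show ?thesis by simp
  next
    case False
    then have "i < k * period" "0 < k" using i(2) by (auto intro: gr0I)
    then obtain k' where k': "k = k' + 1" by (metis Suc_eq_plus1 gr0_implies_Suc)
    have "(k' + 1) * period \<le> n" using mult_le_mono1[OF assms, of period] k' n_eq by simp
    then have "b (k' * period) + slope k' * (real i - real (k' * period)) \<le> b i"
      using slope_edge(1) i(1) by (auto simp: supports_def)
    moreover have "b (k * period) = b (k' * period) + slope k' * real period" using b_next[of k'] k' by simp
    moreover have "vertex_slope k * (real i - real (k * period)) < slope k' * (real i - real (k * period))"
      using vertex_slope_greater[OF \<open>0 < k\<close> assms] k' of_nat_less_iff[where 'a=real, THEN iffD2, OF \<open>i < k * period\<close>]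
      by (intro mult_strict_right_mono_neg) auto
    ultimately show ?thesis using k' by (simp add: algebra_simps)
  qed
qed

lemma regular: "regular a n"
  unfolding regular_def
proof
  show "arith_prog J" unfolding arith_prog_def J_eq by (intro exI[of _ 0] exI[of _ period] exI[of _ K]) simp
  show "\<forall>i\<in>J. (real i, real_of_ereal (a i)) extreme_point_of newton_polygon a n"
    using vertex_extreme unfolding J_eq by (auto simp: b_def mult.commute)
qed

end

lemma not_regular_imp_skew_support_line:
  assumes "n \<ge> 1" "\<forall>i\<le>n. a i \<noteq> -\<infinity>" "a 0 < \<infinity>" "a n < \<infinity>" "\<not> regular a n"
  shows "skew_support_line a n"
proof (rule ccontr)
  assume "\<not> skew_support_line a n"
  then interpret no_skew_support_line a n using assms by unfold_locales
  show False using regular assms(5) by contradiction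
qed

theorem corollary1:
  fixes a :: "nat \<Rightarrow> ereal" and n :: nat
  assumes "n \<ge> 1"
    and "\<forall>i\<le>n. a i \<noteq> -\<infinity>"
    and "a 0 < \<infinity>" and "a n < \<infinity>"
  shows "(regular a n \<longleftrightarrow> tropical_entropy a n = 0) \<and>
         (\<not> regular a n \<longrightarrow> tropical_entropy a n \<ge> 1/6)"
proof (cases "regular a n")
  case True
  then show ?thesis using tropical_entropy_regular[OF True assms] by simp
next
  case False
  obtain C where "\<And>s. real s / 6 - C \<le> real (d_seq a n s)"
    using skew_support_line_d_seq_ge[OF not_regular_imp_skew_support_line[OF assms False]] by blast
  then have "1 / 6 \<le> tropical_entropy a n" by (intro tropical_entropy_ge[of _ C]) simp
  then show ?thesis using False by auto
qed

end
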